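(* Let $n$ individuals be connected by a directed graph with edge set $E\subseteq[n]\times[n]$ (self-loops allowed), in-neighborhoods $\mathcal{N}_i=\{j:(j,i)\in E\}$, and let $d$ be the maximum of the maximum in-degree and maximum out-degree. Suppose $Y_i(\mathbf z)=\sum_{\mathcal S\subseteq\mathcal N_i,|\mathcal S|\le\beta}c_{i,\mathcal S}\prod_{j\in\mathcal S}z_j$ for all $i$ and $\mathbf z\in\{0,1\}^n$, let $Y_{\max}=\max_i\sum_{\mathcal S\subseteq\mathcal N_i,|\mathcal S|\le\beta}|c_{i,\mathcal S}|$, and $\mathrm{TTE}=\frac1n\sum_i(Y_i(\mathbf 1)-Y_i(\mathbf 0))$. Consider a staggered rollout completely randomized design with integer treatment counts $0=k_0<k_1<\dots<k_\beta\le n$: $\mathbf z^0=\mathbf 0$, and for $t\ge1$, $\mathbf z^t$ is obtained from $\mathbf z^{t-1}$ by treating $k_t-k_{t-1}$ additional individuals chosen uniformly at random among the untreated ones (so $\mathbf z^t$ is marginally the indicator of a uniformly random $k_t$-subset, and treatments are monotone in $t$). Observations are $Y^{\mathrm{obs}}_{i,t}=Y_i(\mathbf z^t)+\varepsilon_{i,t}$, with $\varepsilon_{i,t}$ i.i.d. $N(0,\sigma^2)$ independent of the treatments. With $x_t=k_t/n$, define $$\widehat{\mathrm{TTE}}_{\mathrm{PI}}(\mathbf k/n)=\sum_{t=0}^\beta\big(\ell_{t}(1)-\ell_{t}(0)\big)\Big(\frac1n\sum_{i=1}^nY^{\mathrm{obs}}_{i,t}\Big),\qquad \ell_t(x)=\prod_{s\ne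 t}\frac{x-x_s}{x_t-x_s},$$ and $\Delta_{\mathbf k}=\min_{1\le t\le\beta}(k_t-k_{t-1})$. Then this estimator is unbiased for $\mathrm{TTE}$ and has variance $$O\Big(\beta^2Y_{\max}^2\Big(\tfrac{d^2}{n}+\tfrac{\beta^2}{k_1}\Big)\big(\tfrac{n}{\Delta_{\mathbf k}}\big)^{2\beta}+\tfrac{\sigma^2\beta}{n}\big(\tfrac{n}{\Delta_{\mathbf k}}\big)^{2\beta}\Big).$$
   Context: $\ell_t$ are the Lagrange interpolation basis polynomials for the nodes $k_0/n,\dots,k_\beta/n$. *)

theory Defs
  imports "HOL-Probability.Probability"
begin

definition in_nbhd :: "(nat \<times> nat) set \<Rightarrow> nat \<Rightarrow> nat set" where
  "in_nbhd E i = {j. (j, i) \<in> E}"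

definition out_nbhd :: "(nat \<times> nat) set \<Rightarrow> nat \<Rightarrow> nat set" where
  "out_nbhd E i = {j. (i, j) \<in> E}"

definition max_degree :: "nat \<Rightarrow> (nat \<times> nat) set \<Rightarrow> nat" where
  "max_degree n E = max (Max ((\<lambda>i. card (in_nbhd E i)) ` {..<n}))
                         (Max ((\<lambda>i. card (out_nbhd E i)) ` {..<n}))"

definition small_subsets :: "(nat \<times> nat) set \<Rightarrow> nat \<Rightarrow> nat \<Rightarrow> nat set set" where
  "small_subsets E beta i = {S. S \<subseteq> in_nbhd E i \<and> card S \<le> beta}"

definition Y_max :: "nat \<Rightarrow> (nat \<times> nat) set \<Rightarrow> nat \<Rightarrow> (nat \<Rightarrow> nat set \<Rightarrow> real) \<Rightarrow> real" where
  "Y_max n E beta c = Max ((\<lambda>i. \<Sum>S\<in>small_subsets E beta i. \<bar>c i S\<bar>) ` {..<n})"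

text \<open>Treatment vectors z in {0,1}^n are represented by the treated sets {j<n. z_j = 1}.\<close>
definition TTE :: "nat \<Rightarrow> (nat \<Rightarrow> nat set \<Rightarrow> real) \<Rightarrow> real" where
  "TTE n Y = (1 / real n) * (\<Sum>i<n. Y i {..<n} - Y i {})"

text \<open>Staggered rollout completely randomized design: the result maps stage t to the
  treated set at stage t (only stages 0..T are meaningful).\<close>
fun rollout :: "nat \<Rightarrow> (nat \<Rightarrow> nat) \<Rightarrow> nat \<Rightarrow> (nat \<Rightarrow> nat set) pmf" where
  "rollout n k 0 = return_pmf (\<lambda>_. {})"
| "rollout n k (Suc t) =
     bind_pmf (rollout n k t) (\<lambda>Z.
       bind_pmf (pmf_of_set {B. B \<subseteq> {..<n} - Z t \<and> card B = k (Suc t) - k t}) (\<lambda>B.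
         return_pmf (Z(Suc t := Z t \<union> B))))"

definition lagrange_basis :: "(nat \<Rightarrow> real) \<Rightarrow> nat \<Rightarrow> nat \<Rightarrow> real \<Rightarrow> real" where
  "lagrange_basis x beta t y = (\<Prod>s\<in>{0..beta} - {t}. (y - x s) / (x t - x s))"

text \<open>Joint law of treatments and (standardised) noise: the treatment sequence from the
  rollout, independent of i.i.d. standard normals g(i,t), i<n, t<=beta.
  The noise is eps(i,t) = sigma * g(i,t) ~ N(0, sigma^2).\<close>
definition design_measure :: "nat \<Rightarrow> (nat \<Rightarrow> nat) \<Rightarrow> nat
     \<Rightarrow> ((nat \<Rightarrow> nat set) \<times> (nat \<times> nat \<Rightarrow> real)) measure" where
  "design_measure n k beta =
     measure_pmf (rollout n k beta) \<Otimes>\<^sub>M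
     PiM ({..<n} \<times> {..beta}) (\<lambda>_. density lborel std_normal_density)"

definition TTE_PI :: "nat \<Rightarrow> (nat \<Rightarrow> nat) \<Rightarrow> nat \<Rightarrow> real \<Rightarrow> (nat \<Rightarrow> nat set \<Rightarrow> real)
     \<Rightarrow> (nat \<Rightarrow> nat set) \<times> (nat \<times> nat \<Rightarrow> real) \<Rightarrow> real" where
  "TTE_PI n k beta \<sigma> Y \<omega> =
     (let x = (\<lambda>t. real (k t) / real n); Z = fst \<omega>; g = snd \<omega> in
      \<Sum>t\<in>{0..beta}. (lagrange_basis x beta t 1 - lagrange_basis x beta t 0) *
         ((1 / real n) * (\<Sum>i<n. Y i (Z t) + \<sigma> * g (i, t))))"

definition min_gap :: "(nat \<Rightarrow> nat) \<Rightarrow> nat \<Rightarrow> nat" where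
  "min_gap k beta = Min ((\<lambda>t. k t - k (t - 1)) ` {1..beta})"

end

theory Submission
  imports Defs "HOL-Computational_Algebra.Polynomial"
begin

text \<open>
  Under the staggered rollout the treated set at stage \<open>t\<close> is a uniform
  \<open>k\<^sub>t\<close>-subset of the population, so the monomial \<open>\<Prod>j\<in>S. z\<^sub>j\<close> has mean
  \<open>incl_prob n k\<^sub>t |S|\<close>, a polynomial of degree \<open>|S| \<le> \<beta>\<close> in \<open>x\<^sub>t = k\<^sub>t / n\<close> that vanishes
  at 0 (for \<open>S \<noteq> {}\<close>) and equals 1 at 1. Lagrange interpolation at the \<open>\<beta> + 1\<close> nodes
  \<open>x\<^sub>t\<close> is exact on such polynomials, so the weights \<open>w\<^sub>t = \<ell>\<^sub>t(1) - \<ell>\<^sub>t(0)\<close> turn the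
  expected stage averages into \<open>(1/n) \<Sum> c\<^sub>i\<^sub>S [S \<noteq> {}] = TTE\<close>.

  The noise is independent of the treatments, so the variances add, and the
  noise part is \<open>\<sigma>\<^sup>2/n\<^sup>2 \<Sum> w\<^sub>t\<^sup>2\<close> summed over units and stages. The treatment part is bounded
  by Cauchy-Schwarz over the \<open>\<beta> + 1\<close> stages and \<open>|\<ell>\<^sub>t| \<le> (n/\<Delta>)\<^sup>\<beta>\<close> on \<open>[0, 1]\<close>. Within
  one stage the variance of the average outcome is a double sum of covariances of inclusion
  indicators of monomials: such a covariance is at most 1, and a monomial overlaps only the
  monomials of at most \<open>d\<^sup>2\<close> units; for disjoint monomials it is at most \<open>2\<beta>\<^sup>2/k\<close>.
\<close>

section \<open>Lagrange interpolation\<close>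

definition lagrange_basis_poly :: "(nat \<Rightarrow> real) \<Rightarrow> nat \<Rightarrow> nat \<Rightarrow> real poly" where
  "lagrange_basis_poly x beta t = (\<Prod>s\<in>{0..beta} - {t}. [:- x s / (x t - x s), 1 / (x t - x s):])"

lemma poly_lagrange_basis_poly: "poly (lagrange_basis_poly x beta t) y = lagrange_basis x beta t y"
  unfolding lagrange_basis_poly_def lagrange_basis_def poly_prod
  by (intro prod.cong refl) (simp add: diff_divide_distrib)

lemma degree_lagrange_basis_poly:
  assumes "t \<le> beta"
  shows "degree (lagrange_basis_poly x beta t) \<le> beta"
proof -
  have "degree (lagrange_basis_poly x beta t)
      \<le> (\<Sum>s\<in>{0..beta} - {t}. degree [:- x s / (x t - x s), 1 / (x t - x s):])"
    unfolding lagrange_basis_poly_def by (rule order.trans[OF degree_prod_sum_le]) (simp_all add: o_def)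
  also have "\<dots> \<le> (\<Sum>s\<in>{0..beta} - {t}. 1)"
    by (intro sum_mono) simp
  also have "\<dots> = beta" using assms by (simp add: card_Diff_singleton)
  finally show ?thesis .
qed

lemma lagrange_basis_at_node:
  assumes "inj_on x {0..beta}" "t \<le> beta" "u \<le> beta"
  shows "lagrange_basis x beta t (x u) = of_bool (t = u)"
proof (cases "t = u")
  case True
  then have "x t \<noteq> x s" if "s \<in> {0..beta} - {t}" for s
    using assms that by (auto dest: inj_onD)
  then show ?thesis unfolding lagrange_basis_def using True by (auto intro!: prod.neutral)
next
  case False
  then show ?thesis unfolding lagrange_basis_def using assms(3)
    by (auto intro!: prod_zero bexI[of _ u])
qed

lemma lagrange_interpolation:
  assumes inj: "inj_on x {0..beta}" and deg: "degree p \<le> beta"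
  shows "(\<Sum>t\<in>{0..beta}. poly p (x t) * lagrange_basis x beta t y) = poly p y"
proof -
  define q where "q = (\<Sum>t\<in>{0..beta}. smult (poly p (x t)) (lagrange_basis_poly x beta t)) - p"
  have dq: "degree q \<le> beta"
    unfolding q_def using deg
    by (intro degree_diff_le degree_sum_le)
       (auto intro: order.trans[OF degree_smult_le] degree_lagrange_basis_poly)
  have roots: "x ` {0..beta} \<subseteq> {z. poly q z = 0}"
    using inj by (auto simp: q_def poly_sum poly_lagrange_basis_poly lagrange_basis_at_node
                        of_bool_def if_distrib cong: if_cong)
  have "q = 0"
  proof (rule ccontr)
    assume "q \<noteq> 0"
    then have "card (x ` {0..beta}) \<le> card {z. poly q z = 0}"
      using roots by (intro card_mono poly_roots_finite)
    also have "\<dots> \<le> beta"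
      using \<open>q \<noteq> 0\<close> dq card_poly_roots_bound le_trans by blast
    finally show False
      using inj by (simp add: card_image)
  qed
  then have "poly (\<Sum>t\<in>{0..beta}. smult (poly p (x t)) (lagrange_basis_poly x beta t)) y = poly p y"
    by (simp add: q_def)
  then show ?thesis by (simp add: poly_sum poly_lagrange_basis_poly)
qed

lemma abs_lagrange_basis_le:
  assumes "t \<le> beta" "0 < \<delta>"
    and sep: "\<And>s. s \<le> beta \<Longrightarrow> s \<noteq> t \<Longrightarrow> \<delta> \<le> \<bar>x t - x s\<bar>"
    and near: "\<And>s. s \<le> beta \<Longrightarrow> \<bar>y - x s\<bar> \<le> 1"
  shows "\<bar>lagrange_basis x beta t y\<bar> \<le> (1 / \<delta>) ^ beta"
proof -
  have "\<bar>(y - x s) / (x t - x s)\<bar> \<le> 1 / \<delta>" if "s \<in> {0..beta} - {t}" for s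
  proof -
    have "\<bar>y - x s\<bar> / \<bar>x t - x s\<bar> \<le> 1 / \<bar>x t - x s\<bar>"
      using near[of s] that by (intro divide_right_mono) auto
    also have "\<dots> \<le> 1 / \<delta>"
      using sep[of s] that \<open>0 < \<delta>\<close> by (intro divide_left_mono) auto
    finally show ?thesis by (simp add: abs_divide)
  qed
  then have "\<bar>lagrange_basis x beta t y\<bar> \<le> (\<Prod>s\<in>{0..beta} - {t}. 1 / \<delta>)"
    unfolding lagrange_basis_def abs_prod by (intro prod_mono) auto
  also have "\<dots> = (1 / \<delta>) ^ beta"
    using assms(1) by (simp add: card_Diff_singleton)
  finally show ?thesis .
qed

section \<open>Uniform random subsets\<close>

definition uniform_subset :: "'a set \<Rightarrow> nat \<Rightarrow> 'a set pmf" where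
  "uniform_subset S K = pmf_of_set {A. A \<subseteq> S \<and> card A = K}"

lemma finite_subsets_of_card: "finite S \<Longrightarrow> finite {A. A \<subseteq> S \<and> card A = K}"
  by (rule finite_subset[of _ "Pow S"]) auto

lemma ex_subset_of_card: "K \<le> card S \<Longrightarrow> \<exists>A\<subseteq>S. card A = K"
  by (metis obtain_subset_with_card_n)

lemma set_pmf_uniform_subset:
  "finite S \<Longrightarrow> K \<le> card S \<Longrightarrow> set_pmf (uniform_subset S K) = {A. A \<subseteq> S \<and> card A = K}"
  unfolding uniform_subset_def by (simp add: finite_subsets_of_card ex_subset_of_card)

lemma integrable_uniform_subset:
  fixes f :: "'a set \<Rightarrow> real"
  shows "finite S \<Longrightarrow> K \<le> card S \<Longrightarrow> integrable (measure_pmf (uniform_subset S K)) f"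
  by (simp add: integrable_measure_pmf_finite set_pmf_uniform_subset finite_subsets_of_card)

lemma uniform_subset_0: "finite S \<Longrightarrow> uniform_subset S 0 = return_pmf {}"
proof -
  assume "finite S"
  then have "{A. A \<subseteq> S \<and> card A = 0} = {{}}"
    by (auto dest: finite_subset)
  then show ?thesis by (simp add: uniform_subset_def pmf_of_set_singleton)
qed

lemma bij_betw_union_subsets_of_card:
  assumes "finite S" "R \<subseteq> S"
  shows "bij_betw ((\<union>) R) {B. B \<subseteq> S - R \<and> card B = m} {C. C \<subseteq> S \<and> card C = card R + m \<and> R \<subseteq> C}"
proof (rule bij_betw_byWitness[where f' = "\<lambda>C. C - R"])
  have fin: "finite A" if "A \<subseteq> S" for A
    using assms(1) that by (rule finite_subset[rotated])
  show "(\<union>) R ` {B. B \<subseteq> S - R \<and> card B = m} \<subseteq> {C. C \<subseteq> S \<and> card C = card R + m \<and> R \<subseteq> C}"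
    using assms by (auto intro!: card_Un_disjoint fin)
  show "(\<lambda>C. C - R) ` {C. C \<subseteq> S \<and> card C = card R + m \<and> R \<subseteq> C} \<subseteq> {B. B \<subseteq> S - R \<and> card B = m}"
    using assms by (auto simp: card_Diff_subset fin)
qed auto

lemma card_supsets_of_card:
  assumes "finite S" "R \<subseteq> S"
  shows "card {C. C \<subseteq> S \<and> card C = card R + m \<and> R \<subseteq> C} = (card S - card R) choose m"
proof -
  have "card {C. C \<subseteq> S \<and> card C = card R + m \<and> R \<subseteq> C} = card {B. B \<subseteq> S - R \<and> card B = m}"
    using bij_betw_same_card[OF bij_betw_union_subsets_of_card[OF assms]] by simp
  also have "\<dots> = (card S - card R) choose m"
    using assms by (simp add: n_subsets card_Diff_subset finite_subset)
  finally show ?thesis .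
qed

lemma pmf_map_union_uniform_subset:
  assumes S: "finite S" and R: "R \<subseteq> S" and m: "card R + m \<le> card S"
  shows "pmf (map_pmf ((\<union>) R) (uniform_subset (S - R) m)) C
    = of_bool (C \<subseteq> S \<and> card C = card R + m \<and> R \<subseteq> C) / ((card S - card R) choose m)"
proof -
  define X where "X = {C. C \<subseteq> S \<and> card C = card R + m \<and> R \<subseteq> C}"
  note bij = bij_betw_union_subsets_of_card[OF S R, of m, folded X_def]
  have "{B. B \<subseteq> S - R \<and> card B = m} \<noteq> {}"
    using S R m by (simp add: ex_subset_of_card card_Diff_subset finite_subset)
  then have "map_pmf ((\<union>) R) (uniform_subset (S - R) m) = pmf_of_set X"
    unfolding uniform_subset_def using S bij
    by (subst map_pmf_of_set_inj) (auto simp: bij_betw_imp_inj_on bij_betw_imp_surj_on finite_subsets_of_card)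
  moreover have card: "card X = (card S - card R) choose m"
    using card_supsets_of_card[OF S R] by (simp add: X_def)
  moreover have "X \<noteq> {}" "finite X"
    using m card card_gt_0_iff[of X] by (auto simp: zero_less_binomial_iff)
  ultimately show ?thesis
    by (simp add: pmf_of_set X_def)
qed

lemma bind_uniform_subset_union:
  assumes S: "finite S" and Km: "K + m \<le> card S"
  shows "uniform_subset S K \<bind> (\<lambda>A. map_pmf ((\<union>) A) (uniform_subset (S - A) m))
    = uniform_subset S (K + m)"
proof (rule pmf_eqI)
  fix C
  define sub where "sub K = {A. A \<subseteq> S \<and> card A = K}" for K
  have fin: "finite (sub K)" "sub K \<noteq> {}" if "K \<le> card S" for K
    using S that by (auto simp: sub_def finite_subsets_of_card ex_subset_of_card)
  have up: "pmf (map_pmf ((\<union>) A) (uniform_subset (S - A) m)) C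
      = of_bool (C \<in> sub (K + m) \<and> A \<subseteq> C) / ((card S - K) choose m)" if "A \<in> sub K" for A
    using that S Km pmf_map_union_uniform_subset[of S A m C] by (auto simp: sub_def)
  have "pmf (uniform_subset S K \<bind> (\<lambda>A. map_pmf ((\<union>) A) (uniform_subset (S - A) m))) C
      = (\<Sum>A\<in>sub K. pmf (map_pmf ((\<union>) A) (uniform_subset (S - A) m)) C) / card (sub K)"
    using fin[of K] Km unfolding uniform_subset_def[of S K] sub_def by (simp add: pmf_bind_pmf_of_set)
  also have "\<dots> = (\<Sum>A\<in>sub K. of_bool (C \<in> sub (K + m) \<and> A \<subseteq> C)) / ((card S - K) choose m) / (card S choose K)"
    using S by (simp add: up sub_def n_subsets flip: sum_divide_distrib)
  also have "(\<Sum>A\<in>sub K. of_bool (C \<in> sub (K + m) \<and> A \<subseteq> C) :: real)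
      = of_bool (C \<in> sub (K + m)) * real ((K + m) choose K)"
  proof (cases "C \<in> sub (K + m)")
    case True
    then have "sub K \<inter> {A. A \<subseteq> C} = {A. A \<subseteq> C \<and> card A = K}" "finite C"
      using S by (auto simp: sub_def finite_subset)
    then show ?thesis
      using True fin[of K] Km by (simp add: sum_of_bool_eq n_subsets sub_def)
  qed simp
  also have "of_bool (C \<in> sub (K + m)) * real ((K + m) choose K)
      / ((card S - K) choose m) / (card S choose K) = of_bool (C \<in> sub (K + m)) / (card S choose (K + m))"
  proof -
    have "(card S choose (K + m)) * ((K + m) choose K) = (card S choose K) * ((card S - K) choose m)"
      using choose_mult[of K "K + m" "card S"] Km by simp
    then have "real (card S choose (K + m)) * ((K + m) choose K) = (card S choose K) * ((card S - K) choose m)"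
      by (metis of_nat_mult)
    moreover have "0 < card S choose K" "0 < (card S - K) choose m" "0 < card S choose (K + m)"
      using Km by (auto simp: zero_less_binomial_iff)
    ultimately show ?thesis by (simp add: field_simps)
  qed
  also have "\<dots> = pmf (uniform_subset S (K + m)) C"
    using fin[OF Km] S by (simp add: uniform_subset_def sub_def n_subsets)
  finally show "pmf (uniform_subset S K \<bind> (\<lambda>A. map_pmf ((\<union>) A) (uniform_subset (S - A) m))) C
      = pmf (uniform_subset S (K + m)) C" .
qed

text \<open>The probability that a fixed \<open>r\<close>-set lies in a uniform \<open>K\<close>-subset of an \<open>N\<close>-set.\<close>
definition incl_prob :: "nat \<Rightarrow> nat \<Rightarrow> nat \<Rightarrow> real" where
  "incl_prob N K r = (\<Prod>i<r. (real K - real i) / (real N - real i))"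

lemma incl_prob_eq_binomial_ratio:
  assumes "r \<le> N"
  shows "incl_prob N K r = (K choose r) / (N choose r)"
proof -
  have "real (K choose r) / (N choose r) = (real K gchoose r) * fact r / ((real N gchoose r) * fact r)"
    by (simp add: binomial_gbinomial)
  also have "\<dots> = (\<Prod>i<r. real K - real i) / (\<Prod>i<r. real N - real i)"
    by (simp only: gbinomial_mult_fact' atLeast0LessThan)
  also have "\<dots> = incl_prob N K r"
    unfolding incl_prob_def using assms by (subst prod_dividef) auto
  finally show ?thesis ..
qed

lemma incl_prob_nonneg: "r \<le> N \<Longrightarrow> 0 \<le> incl_prob N K r"
  by (simp add: incl_prob_eq_binomial_ratio)

lemma incl_prob_le_1: "r \<le> N \<Longrightarrow> K \<le> N \<Longrightarrow> incl_prob N K r \<le> 1"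
  by (simp add: incl_prob_eq_binomial_ratio binomial_right_mono divide_le_eq_1)

lemma incl_prob_0: "incl_prob N 0 r = of_bool (r = 0)"
  unfolding incl_prob_def by (cases r) (auto simp: prod.lessThan_Suc_shift)

lemma expectation_uniform_subset_contains:
  assumes S: "finite S" and R: "R \<subseteq> S" and K: "K \<le> card S"
  shows "measure_pmf.expectation (uniform_subset S K) (\<lambda>A. of_bool (R \<subseteq> A))
    = incl_prob (card S) K (card R)"
proof -
  define supsets where "supsets = {A. A \<subseteq> S \<and> card A = K \<and> R \<subseteq> A}"
  have "measure_pmf.expectation (uniform_subset S K) (\<lambda>A. of_bool (R \<subseteq> A))
      = card supsets / (card S choose K)"
    using S K unfolding uniform_subset_def supsets_def
    by (simp add: integral_pmf_of_set finite_subsets_of_card ex_subset_of_card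
        n_subsets sum.If_cases Int_def)
  also have "\<dots> = (K choose card R) / (card S choose card R)"
  proof (cases "card R \<le> K")
    case True
    have "supsets = {C. C \<subseteq> S \<and> card C = card R + (K - card R) \<and> R \<subseteq> C}"
      using True by (auto simp: supsets_def)
    then have "card supsets = (card S - card R) choose (K - card R)"
      using card_supsets_of_card[OF S R] by simp
    moreover have "real (card S choose K) * (K choose card R)
        = (card S choose card R) * ((card S - card R) choose (K - card R))"
      using choose_mult[OF True K] by (metis of_nat_mult)
    moreover have "0 < card S choose K" "0 < card S choose card R"
      using K True by (auto simp: zero_less_binomial_iff)
    ultimately show ?thesis by (simp add: field_simps)
  next
    case False
    have "supsets = {}"
      using False S by (auto simp: supsets_def dest: card_mono[OF finite_subset[OF _ S]])
    then show ?thesis using False by simp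
  qed
  also have "\<dots> = incl_prob (card S) K (card R)"
    using R S by (simp add: incl_prob_eq_binomial_ratio card_mono)
  finally show ?thesis .
qed

definition incl_prob_poly :: "nat \<Rightarrow> nat \<Rightarrow> real poly" where
  "incl_prob_poly N r = (\<Prod>i<r. [:- real i / (real N - real i), real N / (real N - real i):])"

lemma poly_incl_prob_poly: "0 < N \<Longrightarrow> poly (incl_prob_poly N r) (real K / real N) = incl_prob N K r"
  unfolding incl_prob_poly_def incl_prob_def poly_prod
  by (intro prod.cong refl) (simp add: diff_divide_distrib)

lemma degree_incl_prob_poly: "degree (incl_prob_poly N r) \<le> r"
proof -
  have "degree (incl_prob_poly N r)
      \<le> (\<Sum>i<r. degree [:- real i / (real N - real i), real N / (real N - real i):])"
    unfolding incl_prob_poly_def by (rule order.trans[OF degree_prod_sum_le]) (simp_all add: o_def)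
  also have "\<dots> \<le> (\<Sum>i<r. 1)"
    by (intro sum_mono) simp
  finally show ?thesis by simp
qed

lemma poly_incl_prob_poly_0: "poly (incl_prob_poly N r) 0 = of_bool (r = 0)"
  unfolding incl_prob_poly_def poly_prod by (cases r) (auto simp: prod.lessThan_Suc_shift)

lemma poly_incl_prob_poly_1: "r \<le> N \<Longrightarrow> poly (incl_prob_poly N r) 1 = 1"
  unfolding incl_prob_poly_def poly_prod by (intro prod.neutral) (simp add: diff_divide_distrib[symmetric])

section \<open>Covariances of inclusion indicators\<close>

lemma incl_prob_add:
  "incl_prob N K (a + b)
    = incl_prob N K a * (\<Prod>i<b. (real K - real a - real i) / (real N - real a - real i))"
  unfolding incl_prob_def by (induction b) (simp_all add: algebra_simps)

lemma abs_incl_prob_add_minus_mult_le: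
  assumes "2 * a \<le> K" "2 * b \<le> K" "K \<le> N"
  shows "\<bar>incl_prob N K (a + b) - incl_prob N K a * incl_prob N K b\<bar> \<le> 2 * a * b / K"
proof (cases "b = 0")
  case False
  define x where "x i = (real K - real i) / (real N - real i)" for i
  define y where "y i = (real K - real a - real i) / (real N - real a - real i)" for i
  have x: "0 \<le> x i" "x i \<le> 1" if "i < K" for i
    using that assms(3) by (auto simp: x_def divide_le_eq_1)
  have y: "0 \<le> y i" "y i \<le> 1" if "i < b" for i
    using that assms by (auto simp: y_def divide_le_eq_1)
  have xy: "\<bar>y i - x i\<bar> \<le> 2 * a / K" if "i < b" for i
  proof -
    have pos: "0 < real N - real a - real i" "0 < real K - real i"
      using that assms by linarith+
    define u where "u = a / (real N - real i)"
    define v where "v = (real N - real K) / (real N - real a - real i)"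
    have "x i - y i = u * v"
      using pos by (simp add: x_def y_def u_def v_def field_simps)
    moreover have "0 \<le> u" "0 \<le> v" "v \<le> 1"
      using pos that assms by (auto simp: u_def v_def)
    moreover have "u \<le> a / (K / 2)"
      using pos that assms unfolding u_def by (intro divide_left_mono) auto
    ultimately show ?thesis
      using mult_left_le[of v u] by (simp add: abs_minus_commute mult.commute)
  qed
  have ip: "\<bar>incl_prob N K a\<bar> \<le> 1"
    unfolding incl_prob_def using x assms by (auto simp: abs_prod intro!: prod_le_1)
  have "\<bar>(\<Prod>i<b. y i) - (\<Prod>i<b. x i)\<bar> \<le> (\<Sum>i<b. \<bar>y i - x i\<bar>)"
    using norm_prod_diff[of "{..<b}" y x] x y assms by (auto simp: real_norm_def)
  also have "\<dots> \<le> (\<Sum>i<b. 2 * a / K)"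
    by (intro sum_mono xy) simp
  finally have "\<bar>incl_prob N K a\<bar> * \<bar>(\<Prod>i<b. y i) - (\<Prod>i<b. x i)\<bar> \<le> 1 * (b * (2 * a / K))"
    using ip by (intro mult_mono) auto
  moreover have "incl_prob N K (a + b) - incl_prob N K a * incl_prob N K b
      = incl_prob N K a * ((\<Prod>i<b. y i) - (\<Prod>i<b. x i))"
    unfolding incl_prob_add x_def y_def incl_prob_def[of N K b] by (simp add: right_diff_distrib)
  ultimately show ?thesis
    by (simp add: abs_mult mult_ac)
qed (simp add: incl_prob_def)

lemma abs_incl_prob_minus_mult_le_1:
  assumes "r \<le> N" "a \<le> N" "b \<le> N" "K \<le> N"
  shows "\<bar>incl_prob N K r - incl_prob N K a * incl_prob N K b\<bar> \<le> 1"
proof -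
  have "0 \<le> incl_prob N K a * incl_prob N K b" "incl_prob N K a * incl_prob N K b \<le> 1"
    "0 \<le> incl_prob N K r" "incl_prob N K r \<le> 1"
    using assms by (simp_all add: incl_prob_nonneg incl_prob_le_1 mult_le_one)
  then show ?thesis by (simp add: abs_le_iff)
qed

lemma abs_incl_prob_add_minus_mult_le_sq:
  assumes "a \<le> beta" "b \<le> beta" "a + b \<le> N" "K \<le> N" "1 \<le> beta"
  shows "\<bar>incl_prob N K (a + b) - incl_prob N K a * incl_prob N K b\<bar> \<le> 2 * real beta ^ 2 / K"
proof -
  consider "K = 0" | "0 < K" "K < 2 * beta" | "2 * beta \<le> K" by linarith
  then show ?thesis
  proof cases
    case 1
    then show ?thesis by (simp add: incl_prob_0)
  next
    case 2
    have "K \<le> 2 * beta ^ 2"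
      using 2 le_square[of beta] unfolding power2_eq_square by linarith
    then have "real K \<le> 2 * real beta ^ 2"
      by (metis of_nat_le_iff of_nat_mult of_nat_numeral of_nat_power)
    then have "1 \<le> 2 * real beta ^ 2 / K"
      using 2 by (simp add: le_divide_eq)
    moreover have "\<bar>incl_prob N K (a + b) - incl_prob N K a * incl_prob N K b\<bar> \<le> 1"
      using assms by (intro abs_incl_prob_minus_mult_le_1) auto
    ultimately show ?thesis by linarith
  next
    case 3
    have "2 * real a * b / K \<le> 2 * real beta ^ 2 / K"
      using assms by (intro divide_right_mono) (auto simp: power2_eq_square intro!: mult_mono)
    then show ?thesis
      using abs_incl_prob_add_minus_mult_le[of a K b N] 3 assms by simp
  qed
qed

lemma abs_incl_prob_union_minus_mult_le:
  assumes S: "finite S" and T: "T \<subseteq> S" "T' \<subseteq> S" "card T \<le> beta" "card T' \<le> beta"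
    and K: "K \<le> card S" and "1 \<le> beta"
  shows "\<bar>incl_prob (card S) K (card (T \<union> T'))
      - incl_prob (card S) K (card T) * incl_prob (card S) K (card T')\<bar>
    \<le> of_bool (T \<inter> T' \<noteq> {}) + 2 * real beta ^ 2 / K"
proof -
  have fin: "finite T" "finite T'" and card: "card (T \<union> T') \<le> card S"
    using S T by (auto intro: finite_subset card_mono)
  show ?thesis
  proof (cases "T \<inter> T' = {}")
    case True
    then show ?thesis
      using fin card T K \<open>1 \<le> beta\<close> by (simp add: card_Un_disjoint abs_incl_prob_add_minus_mult_le_sq)
  next
    case False
    have "\<bar>incl_prob (card S) K (card (T \<union> T'))
        - incl_prob (card S) K (card T) * incl_prob (card S) K (card T')\<bar> \<le> 1"
      using S T card K by (intro abs_incl_prob_minus_mult_le_1) (simp_all add: card_mono)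
    then show ?thesis using False by (simp add: add_increasing2)
  qed
qed

lemma (in prob_space) variance_sum:
  fixes X :: "'i \<Rightarrow> 'a \<Rightarrow> real"
  assumes "finite P"
    and "\<And>p. p \<in> P \<Longrightarrow> integrable M (X p)"
    and "\<And>p q. p \<in> P \<Longrightarrow> q \<in> P \<Longrightarrow> integrable M (\<lambda>x. X p x * X q x)"
  shows "variance (\<lambda>x. \<Sum>p\<in>P. X p x)
    = (\<Sum>p\<in>P. \<Sum>q\<in>P. expectation (\<lambda>x. X p x * X q x) - expectation (X p) * expectation (X q))"
proof -
  have sq: "(\<Sum>p\<in>P. X p x)\<^sup>2 = (\<Sum>p\<in>P. \<Sum>q\<in>P. X p x * X q x)" for x
    by (simp add: power2_eq_square sum_product)
  have "variance (\<lambda>x. \<Sum>p\<in>P. X p x) = expectation (\<lambda>x. (\<Sum>p\<in>P. X p x)\<^sup>2) - (expectation (\<lambda>x. \<Sum>p\<in>P. X p x))\<^sup>2"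
    using assms by (intro variance_eq) (auto simp: sq)
  also have "\<dots> = (\<Sum>p\<in>P. \<Sum>q\<in>P. expectation (\<lambda>x. X p x * X q x)) - (\<Sum>p\<in>P. expectation (X p))\<^sup>2"
    using assms by (simp add: sq Bochner_Integration.integral_sum Bochner_Integration.integrable_sum)
  finally show ?thesis
    by (simp add: power2_eq_square sum_product sum_subtractf)
qed

lemma (in prob_space) variance_scale:
  fixes X :: "'a \<Rightarrow> real"
  shows "variance (\<lambda>x. c * X x) = c\<^sup>2 * variance X"
proof -
  have "(c * X x - expectation (\<lambda>x. c * X x))\<^sup>2 = c\<^sup>2 * (X x - expectation X)\<^sup>2" for x
    by (simp add: power2_eq_square algebra_simps)
  then show ?thesis by simp
qed

lemma (in prob_space) variance_sum_le:
  fixes X :: "'i \<Rightarrow> 'a \<Rightarrow> real"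
  assumes T: "finite T"
    and X: "\<And>t. t \<in> T \<Longrightarrow> integrable M (X t)" "\<And>t. t \<in> T \<Longrightarrow> integrable M (\<lambda>x. (X t x)\<^sup>2)"
  shows "variance (\<lambda>x. \<Sum>t\<in>T. X t x) \<le> card T * (\<Sum>t\<in>T. variance (X t))"
proof -
  have dev: "(\<Sum>t\<in>T. X t x) - expectation (\<lambda>x. \<Sum>t\<in>T. X t x) = (\<Sum>t\<in>T. X t x - expectation (X t))" for x
    using X by (simp add: Bochner_Integration.integral_sum sum_subtractf)
  have sq: "integrable M (\<lambda>x. (X t x - expectation (X t))\<^sup>2)" if "t \<in> T" for t
    using X[OF that] by (simp add: power2_diff)
  have "variance (\<lambda>x. \<Sum>t\<in>T. X t x)
      \<le> expectation (\<lambda>x. card T * (\<Sum>t\<in>T. (X t x - expectation (X t))\<^sup>2))"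
    unfolding dev using sq sum_squared_le_sum_of_squares[of "\<lambda>t. X t _ - expectation (X t)" T]
    by (intro integral_mono') (auto simp: mult.commute intro!: mult_nonneg_nonneg sum_nonneg)
  also have "\<dots> = card T * (\<Sum>t\<in>T. variance (X t))"
    using sq by (simp add: Bochner_Integration.integral_sum)
  finally show ?thesis .
qed

lemma variance_uniform_subset_indicators:
  fixes w :: "'i \<Rightarrow> real" and T :: "'i \<Rightarrow> 'a set"
  assumes S: "finite S" and K: "K \<le> card S" and P: "finite P" and "1 \<le> beta"
    and T: "\<And>p. p \<in> P \<Longrightarrow> T p \<subseteq> S" "\<And>p. p \<in> P \<Longrightarrow> card (T p) \<le> beta"
  shows "measure_pmf.variance (uniform_subset S K) (\<lambda>A. \<Sum>p\<in>P. w p * of_bool (T p \<subseteq> A))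
    \<le> (\<Sum>p\<in>P. \<Sum>q\<in>P. \<bar>w p\<bar> * \<bar>w q\<bar> * (of_bool (T p \<inter> T q \<noteq> {}) + 2 * real beta ^ 2 / K))"
proof -
  let ?U = "uniform_subset S K"
  let ?\<pi> = "\<lambda>R. incl_prob (card S) K (card R)"
  have E: "measure_pmf.expectation ?U (\<lambda>A. of_bool (R \<subseteq> A)) = ?\<pi> R" if "R \<subseteq> S" for R
    using expectation_uniform_subset_contains[OF S that K] .
  have cov: "\<bar>?\<pi> (T p \<union> T q) - ?\<pi> (T p) * ?\<pi> (T q)\<bar> \<le> of_bool (T p \<inter> T q \<noteq> {}) + 2 * real beta ^ 2 / K"
    if "p \<in> P" "q \<in> P" for p q
    using that T S K \<open>1 \<le> beta\<close> by (intro abs_incl_prob_union_minus_mult_le) auto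
  let ?X = "\<lambda>p A. w p * of_bool (T p \<subseteq> A)"
  have "measure_pmf.variance ?U (\<lambda>A. \<Sum>p\<in>P. ?X p A)
      = (\<Sum>p\<in>P. \<Sum>q\<in>P. measure_pmf.expectation ?U (\<lambda>A. ?X p A * ?X q A)
          - measure_pmf.expectation ?U (?X p) * measure_pmf.expectation ?U (?X q))"
    using S K P by (intro measure_pmf.variance_sum) (auto simp: integrable_uniform_subset)
  also have "\<dots> = (\<Sum>p\<in>P. \<Sum>q\<in>P. w p * w q * (?\<pi> (T p \<union> T q) - ?\<pi> (T p) * ?\<pi> (T q)))"
  proof (intro sum.cong refl)
    fix p q assume "p \<in> P" "q \<in> P"
    have "measure_pmf.expectation ?U (\<lambda>A. of_bool (T p \<subseteq> A) * of_bool (T q \<subseteq> A)) = ?\<pi> (T p \<union> T q)"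
      using E[of "T p \<union> T q"] T(1) \<open>p \<in> P\<close> \<open>q \<in> P\<close> by (simp flip: of_bool_conj)
    then show "measure_pmf.expectation ?U (\<lambda>A. ?X p A * ?X q A)
        - measure_pmf.expectation ?U (?X p) * measure_pmf.expectation ?U (?X q)
        = w p * w q * (?\<pi> (T p \<union> T q) - ?\<pi> (T p) * ?\<pi> (T q))"
      using T(1) \<open>p \<in> P\<close> \<open>q \<in> P\<close> by (simp add: E algebra_simps)
  qed
  also have "\<dots> \<le> (\<Sum>p\<in>P. \<Sum>q\<in>P. \<bar>w p\<bar> * \<bar>w q\<bar> * (of_bool (T p \<inter> T q \<noteq> {}) + 2 * real beta ^ 2 / K))"
  proof (intro sum_mono)
    fix p q assume "p \<in> P" "q \<in> P"
    have "w p * w q * (?\<pi> (T p \<union> T q) - ?\<pi> (T p) * ?\<pi> (T q))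
        \<le> \<bar>w p\<bar> * \<bar>w q\<bar> * \<bar>?\<pi> (T p \<union> T q) - ?\<pi> (T p) * ?\<pi> (T q)\<bar>"
      by (metis abs_ge_self abs_mult)
    also have "\<dots> \<le> \<bar>w p\<bar> * \<bar>w q\<bar> * (of_bool (T p \<inter> T q \<noteq> {}) + 2 * real beta ^ 2 / K)"
      using cov[OF \<open>p \<in> P\<close> \<open>q \<in> P\<close>] by (intro mult_left_mono) auto
    finally show "w p * w q * (?\<pi> (T p \<union> T q) - ?\<pi> (T p) * ?\<pi> (T q))
        \<le> \<bar>w p\<bar> * \<bar>w q\<bar> * (of_bool (T p \<inter> T q \<noteq> {}) + 2 * real beta ^ 2 / K)" .
  qed
  finally show ?thesis .
qed

section \<open>Interference model\<close>

lemma prod_of_bool_mem: "finite S \<Longrightarrow> (\<Prod>j\<in>S. of_bool (j \<in> A) :: real) = of_bool (S \<subseteq> A)"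
  by (induction S rule: finite_induct) auto

definition monomials :: "nat \<Rightarrow> (nat \<times> nat) set \<Rightarrow> nat \<Rightarrow> (nat \<times> nat set) set" where
  "monomials n E beta = Sigma {..<n} (small_subsets E beta)"

definition mean_outcome ::
    "nat \<Rightarrow> (nat \<times> nat) set \<Rightarrow> nat \<Rightarrow> (nat \<Rightarrow> nat set \<Rightarrow> real) \<Rightarrow> nat set \<Rightarrow> real" where
  "mean_outcome n E beta c A = (1 / real n) * (\<Sum>(i, S)\<in>monomials n E beta. c i S * of_bool (S \<subseteq> A))"

context
  fixes n :: nat and E :: "(nat \<times> nat) set"
  assumes E: "E \<subseteq> {..<n} \<times> {..<n}"
begin

lemma in_nbhd_subset: "in_nbhd E i \<subseteq> {..<n}"
  using E by (auto simp: in_nbhd_def)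

lemma finite_small_subsets: "finite (small_subsets E beta i)"
  unfolding small_subsets_def
  by (rule finite_subset[of _ "Pow (in_nbhd E i)"]) (auto intro: finite_subset[OF in_nbhd_subset])

lemma small_subsetsD: "S \<in> small_subsets E beta i \<Longrightarrow> S \<subseteq> {..<n} \<and> card S \<le> beta"
  unfolding small_subsets_def using in_nbhd_subset by blast

lemma finite_monomials: "finite (monomials n E beta)"
  unfolding monomials_def by (auto intro: finite_small_subsets)

lemma monomialsD: "(i, S) \<in> monomials n E beta \<Longrightarrow> i < n \<and> S \<subseteq> {..<n} \<and> card S \<le> beta"
  unfolding monomials_def using small_subsetsD by auto

lemma card_le_max_degree:
  assumes "(i, S) \<in> monomials n E beta"
  shows "card S \<le> max_degree n E"
proof -
  have "card S \<le> card (in_nbhd E i)"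
    using assms by (auto simp: monomials_def small_subsets_def intro: card_mono finite_subset[OF in_nbhd_subset])
  also have "\<dots> \<le> max_degree n E"
    using assms unfolding max_degree_def monomials_def by (auto intro: le_max_iff_disj[THEN iffD2] Max_ge)
  finally show ?thesis .
qed

lemma card_out_nbhd_le_max_degree: "j < n \<Longrightarrow> card (out_nbhd E j) \<le> max_degree n E"
  unfolding max_degree_def by (auto intro: le_max_iff_disj[THEN iffD2] Max_ge)

lemma sum_abs_coeffs_row_le: "i < n \<Longrightarrow> (\<Sum>S\<in>small_subsets E beta i. \<bar>c i S\<bar>) \<le> Y_max n E beta c"
  unfolding Y_max_def by (intro Max_ge) auto

lemma sum_abs_coeffs_le:
  "(\<Sum>(i, S)\<in>monomials n E beta. \<bar>c i S\<bar>) \<le> n * Y_max n E beta c"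
proof -
  have "(\<Sum>(i, S)\<in>monomials n E beta. \<bar>c i S\<bar>) = (\<Sum>i<n. \<Sum>S\<in>small_subsets E beta i. \<bar>c i S\<bar>)"
    unfolding monomials_def by (rule sum.Sigma[symmetric]) (auto intro: finite_small_subsets)
  also have "\<dots> \<le> (\<Sum>i<n. Y_max n E beta c)"
    by (intro sum_mono sum_abs_coeffs_row_le) auto
  finally show ?thesis by simp
qed

lemma Y_max_nonneg: "0 < n \<Longrightarrow> 0 \<le> Y_max n E beta c"
  using sum_abs_coeffs_row_le[where i = 0 and beta = beta and c = c]
  by (meson order.trans sum_nonneg abs_ge_zero)

lemma card_UN_out_nbhd_le:
  assumes iS: "(i, S) \<in> monomials n E beta"
  shows "card (\<Union>j\<in>S. out_nbhd E j) \<le> max_degree n E ^ 2"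
proof -
  have S: "S \<subseteq> {..<n}" "finite S"
    using monomialsD[OF iS] finite_subset by auto
  have "card (\<Union>j\<in>S. out_nbhd E j) \<le> (\<Sum>j\<in>S. card (out_nbhd E j))"
    using S by (intro card_UN_le) auto
  also have "\<dots> \<le> (\<Sum>j\<in>S. max_degree n E)"
    using S by (intro sum_mono card_out_nbhd_le_max_degree) auto
  also have "\<dots> \<le> max_degree n E ^ 2"
    using card_le_max_degree[OF iS] by (simp add: power2_eq_square)
  finally show ?thesis .
qed

text \<open>A monomial of unit \<open>i'\<close> can meet \<open>S\<close> only if \<open>i'\<close> is an out-neighbour of a
  member of \<open>S\<close>; there are at most \<open>card S * d \<le> d\<^sup>2\<close> such units.\<close>
lemma sum_abs_coeffs_overlap_le:
  assumes iS: "(i, S) \<in> monomials n E beta"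
  shows "(\<Sum>(i', S')\<in>monomials n E beta. \<bar>c i' S'\<bar> * of_bool (S \<inter> S' \<noteq> {}))
    \<le> max_degree n E ^ 2 * Y_max n E beta c"
proof -
  define V where "V = (\<Union>j\<in>S. out_nbhd E j)"
  have "(\<Sum>(i', S')\<in>monomials n E beta. \<bar>c i' S'\<bar> * of_bool (S \<inter> S' \<noteq> {}))
      = (\<Sum>i'<n. \<Sum>S'\<in>small_subsets E beta i'. \<bar>c i' S'\<bar> * of_bool (S \<inter> S' \<noteq> {}))"
    unfolding monomials_def by (rule sum.Sigma[symmetric]) (auto intro: finite_small_subsets)
  also have "\<dots> \<le> (\<Sum>i'<n. of_bool (i' \<in> V) * Y_max n E beta c)"
  proof (intro sum_mono)
    fix i' assume "i' \<in> {..<n}"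
    show "(\<Sum>S'\<in>small_subsets E beta i'. \<bar>c i' S'\<bar> * of_bool (S \<inter> S' \<noteq> {}))
        \<le> of_bool (i' \<in> V) * Y_max n E beta c"
    proof (cases "i' \<in> V")
      case True
      have "(\<Sum>S'\<in>small_subsets E beta i'. \<bar>c i' S'\<bar> * of_bool (S \<inter> S' \<noteq> {}))
          \<le> (\<Sum>S'\<in>small_subsets E beta i'. \<bar>c i' S'\<bar>)"
        by (intro sum_mono) auto
      also have "\<dots> \<le> Y_max n E beta c"
        using \<open>i' \<in> {..<n}\<close> by (simp add: sum_abs_coeffs_row_le)
      finally show ?thesis using True by simp
    next
      case False
      then have "S \<inter> S' = {}" if "S' \<in> small_subsets E beta i'" for S'
        using that by (auto simp: V_def small_subsets_def in_nbhd_def out_nbhd_def)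
      then show ?thesis using False by simp
    qed
  qed
  also have "\<dots> = card V * Y_max n E beta c"
  proof -
    have "V \<subseteq> {..<n}" using E by (auto simp: V_def out_nbhd_def)
    then show ?thesis by (simp add: sum_distrib_right[symmetric] sum_of_bool_eq Int_absorb1)
  qed
  also have "\<dots> \<le> max_degree n E ^ 2 * Y_max n E beta c"
    using card_UN_out_nbhd_le[OF iS] monomialsD[OF iS] Y_max_nonneg[of beta c]
    unfolding V_def by (intro mult_right_mono) (auto simp flip: of_nat_power)
  finally show ?thesis .
qed

lemma expectation_mean_outcome:
  assumes "K \<le> n"
  shows "measure_pmf.expectation (uniform_subset {..<n} K) (mean_outcome n E beta c)
    = (1 / real n) * (\<Sum>(i, S)\<in>monomials n E beta. c i S * incl_prob n K (card S))"
proof -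
  have "measure_pmf.expectation (uniform_subset {..<n} K)
      (\<lambda>A. \<Sum>(i, S)\<in>monomials n E beta. c i S * of_bool (S \<subseteq> A))
    = (\<Sum>(i, S)\<in>monomials n E beta.
        measure_pmf.expectation (uniform_subset {..<n} K) (\<lambda>A. c i S * of_bool (S \<subseteq> A)))"
    unfolding case_prod_unfold using assms
    by (intro Bochner_Integration.integral_sum) (simp add: integrable_uniform_subset)
  also have "\<dots> = (\<Sum>(i, S)\<in>monomials n E beta. c i S * incl_prob n K (card S))"
    using assms by (intro sum.cong refl)
      (auto simp: expectation_uniform_subset_contains dest: monomialsD)
  finally have "measure_pmf.expectation (uniform_subset {..<n} K)
      (\<lambda>A. \<Sum>(i, S)\<in>monomials n E beta. c i S * of_bool (S \<subseteq> A))
    = (\<Sum>(i, S)\<in>monomials n E beta. c i S * incl_prob n K (card S))" .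
  then show ?thesis
    unfolding mean_outcome_def[abs_def] by (simp only: integral_mult_right_zero)
qed

lemma variance_mean_outcome:
  assumes "0 < n" "1 \<le> beta" "K \<le> n"
  shows "measure_pmf.variance (uniform_subset {..<n} K) (mean_outcome n E beta c)
    \<le> Y_max n E beta c ^ 2 * max_degree n E ^ 2 / n + 2 * real beta ^ 2 * Y_max n E beta c ^ 2 / K"
proof -
  define P where "P = monomials n E beta"
  define a where "a p = \<bar>c (fst p) (snd p)\<bar>" for p
  define Ym where "Ym = Y_max n E beta c"
  define D where "D = real (max_degree n E)"
  have mean: "mean_outcome n E beta c = (\<lambda>A. \<Sum>p\<in>P. c (fst p) (snd p) / n * of_bool (snd p \<subseteq> A))"
    by (auto simp: mean_outcome_def P_def sum_distrib_left case_prod_unfold)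
  have "measure_pmf.variance (uniform_subset {..<n} K) (mean_outcome n E beta c)
      \<le> (\<Sum>p\<in>P. \<Sum>q\<in>P. a p / n * (a q / n) * (of_bool (snd p \<inter> snd q \<noteq> {}) + 2 * real beta ^ 2 / K))"
    unfolding mean using assms
    by (intro order.trans[OF variance_uniform_subset_indicators[where beta = beta]])
       (auto simp: P_def a_def finite_monomials abs_divide dest!: monomialsD)
  also have "\<dots> = ((\<Sum>p\<in>P. a p * (\<Sum>q\<in>P. a q * of_bool (snd p \<inter> snd q \<noteq> {})))
      + 2 * real beta ^ 2 / K * (\<Sum>p\<in>P. a p)\<^sup>2) / n\<^sup>2"
    by (simp add: sum_distrib_left sum_distrib_right sum.distrib power2_eq_square sum_product
        algebra_simps add_divide_distrib sum_divide_distrib)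
  also have "\<dots> \<le> ((\<Sum>p\<in>P. a p * (D\<^sup>2 * Ym)) + 2 * real beta ^ 2 / K * (n * Ym)\<^sup>2) / n\<^sup>2"
  proof (intro divide_right_mono add_mono sum_mono mult_left_mono power_mono)
    fix p assume "p \<in> P"
    then show "(\<Sum>q\<in>P. a q * of_bool (snd p \<inter> snd q \<noteq> {})) \<le> D\<^sup>2 * Ym"
      using sum_abs_coeffs_overlap_le[where beta = beta and c = c, of "fst p" "snd p"]
      by (simp add: P_def a_def D_def Ym_def case_prod_unfold)
  next
    show "(\<Sum>p\<in>P. a p) \<le> n * Ym"
      using sum_abs_coeffs_le[where beta = beta and c = c] by (simp add: P_def a_def Ym_def case_prod_unfold)
  qed (auto simp: a_def sum_nonneg)
  also have "\<dots> \<le> ((n * Ym) * (D\<^sup>2 * Ym) + 2 * real beta ^ 2 / K * (n * Ym)\<^sup>2) / n\<^sup>2"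
    using sum_abs_coeffs_le[where beta = beta and c = c] Y_max_nonneg[OF assms(1), of beta c]
    by (intro divide_right_mono add_mono mult_right_mono)
       (auto simp: P_def a_def Ym_def case_prod_unfold simp flip: sum_distrib_right
             intro!: mult_right_mono)
  also have "\<dots> = Ym ^ 2 * D ^ 2 / n + 2 * real beta ^ 2 * Ym ^ 2 / K"
    using assms(1) by (simp add: field_simps power2_eq_square)
  finally show ?thesis by (simp add: Ym_def D_def)
qed

lemma mean_potential_outcome:
  assumes Y: "\<forall>i<n. \<forall>Z\<subseteq>{..<n}. Y i Z = (\<Sum>S\<in>small_subsets E beta i. c i S * (\<Prod>j\<in>S. of_bool (j \<in> Z)))"
    and A: "A \<subseteq> {..<n}"
  shows "(1 / real n) * (\<Sum>i<n. Y i A) = mean_outcome n E beta c A"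
proof -
  have "(\<Prod>j\<in>S. of_bool (j \<in> A)) = (of_bool (S \<subseteq> A) :: real)" if "S \<in> small_subsets E beta i" for S i
    using small_subsetsD[OF that] by (intro prod_of_bool_mem) (auto intro: finite_subset)
  then have "Y i A = (\<Sum>S\<in>small_subsets E beta i. c i S * of_bool (S \<subseteq> A))" if "i < n" for i
    using Y that A by simp
  then show ?thesis
    unfolding mean_outcome_def monomials_def
    by (simp add: sum.Sigma[symmetric] finite_small_subsets)
qed

lemma TTE_eq_sum_coeffs:
  assumes Y: "\<forall>i<n. \<forall>Z\<subseteq>{..<n}. Y i Z = (\<Sum>S\<in>small_subsets E beta i. c i S * (\<Prod>j\<in>S. of_bool (j \<in> Z)))"
  shows "TTE n Y = (1 / real n) * (\<Sum>(i, S)\<in>monomials n E beta. c i S * of_bool (S \<noteq> {}))"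
proof -
  have "TTE n Y = mean_outcome n E beta c {..<n} - mean_outcome n E beta c {}"
    unfolding TTE_def
    using mean_potential_outcome[OF Y, of "{..<n}"] mean_potential_outcome[OF Y, of "{}"]
    by (simp add: sum_subtractf right_diff_distrib)
  also have "\<dots> = (1 / real n) * (\<Sum>(i, S)\<in>monomials n E beta. c i S * of_bool (S \<noteq> {}))"
    unfolding mean_outcome_def right_diff_distrib[symmetric] sum_subtractf[symmetric]
    by (intro arg_cong[where f = "(*) _"] sum.cong) (auto dest: monomialsD)
  finally show ?thesis .
qed

end

section \<open>Staggered rollout\<close>

lemma rollout_stage_distribution:
  assumes "k 0 = 0" "\<forall>s<T. k s \<le> k (Suc s)" "k T \<le> n" "t \<le> T"
  shows "map_pmf (\<lambda>Z. Z t) (rollout n k T) = uniform_subset {..<n} (k t)"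
  using assms
proof (induction T arbitrary: t)
  case 0
  then show ?case by (simp add: uniform_subset_0)
next
  case (Suc T)
  have IH: "map_pmf (\<lambda>Z. Z s) (rollout n k T) = uniform_subset {..<n} (k s)" if "s \<le> T" for s
    using Suc.prems that by (intro Suc.IH) auto
  show ?case
  proof (cases "t \<le> T")
    case True
    then show ?thesis
      by (simp add: map_bind_pmf bind_return_pmf' flip: IH[OF True]) (simp add: map_pmf_def)
  next
    case False
    then have t: "t = Suc T" using Suc.prems by simp
    have "map_pmf (\<lambda>Z. Z t) (rollout n k (Suc T))
        = map_pmf (\<lambda>Z. Z T) (rollout n k T) \<bind>
            (\<lambda>A. map_pmf ((\<union>) A) (uniform_subset ({..<n} - A) (k (Suc T) - k T)))"
      unfolding t rollout.simps map_bind_pmf map_return_pmf bind_map_pmf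
      by (simp add: uniform_subset_def map_pmf_def)
    also have "\<dots> = uniform_subset {..<n} (k T + (k (Suc T) - k T))"
      using Suc.prems by (simp add: IH bind_uniform_subset_union)
    finally show ?thesis using Suc.prems t by simp
  qed
qed

lemma rollout_beyond: "Z \<in> set_pmf (rollout n k T) \<Longrightarrow> T < t \<Longrightarrow> Z t = {}"
proof (induction T arbitrary: Z)
  case (Suc T)
  then obtain Z' B where "Z' \<in> set_pmf (rollout n k T)" "Z = Z'(Suc T := Z' T \<union> B)"
    by auto
  then show ?case using Suc by auto
qed simp

lemma finite_set_pmf_rollout:
  assumes "k 0 = 0" "\<forall>s<T. k s \<le> k (Suc s)" "k T \<le> n" "\<forall>s\<le>T. k s \<le> n"
  shows "finite (set_pmf (rollout n k T))"
proof -
  have "set_pmf (rollout n k T)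
      \<subseteq> {Z. \<forall>t. (t \<in> {..T} \<longrightarrow> Z t \<in> Pow {..<n}) \<and> (t \<notin> {..T} \<longrightarrow> Z t = {})}"
  proof (intro subsetI CollectI allI conjI impI)
    fix Z t assume Z: "Z \<in> set_pmf (rollout n k T)"
    show "Z t = {}" if "t \<notin> {..T}" using that rollout_beyond[OF Z] by simp
    assume "t \<in> {..T}"
    then have "Z t \<in> set_pmf (uniform_subset {..<n} (k t))"
      using Z rollout_stage_distribution[OF assms(1-3), of t, symmetric] by auto
    then show "Z t \<in> Pow {..<n}"
      using assms(4) \<open>t \<in> {..T}\<close> by (simp add: set_pmf_uniform_subset)
  qed
  then show ?thesis
    by (rule finite_subset) (intro finite_set_of_finite_funs; simp)
qed

section \<open>Gaussian noise and independent sums\<close>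

abbreviation std_normal :: "real measure" where
  "std_normal \<equiv> density lborel std_normal_density"

interpretation std_normal: prob_space std_normal
  by (rule prob_space_normal_density) simp

lemma std_normal_moments:
  shows "integrable std_normal (\<lambda>x. x)" "integral\<^sup>L std_normal (\<lambda>x. x) = 0"
    and "integrable std_normal (\<lambda>x. x * x)" "integral\<^sup>L std_normal (\<lambda>x. x * x) = 1"
proof -
  show "integrable std_normal (\<lambda>x. x)"
    using integrable_std_normal_moment[of 1] by (subst integrable_density) auto
  show "integral\<^sup>L std_normal (\<lambda>x. x) = 0"
    using integral_std_normal_moment_odd[of 0] by (subst integral_density) auto
  show "integrable std_normal (\<lambda>x. x * x)"
    using integrable_std_normal_moment[of 2]
    by (subst integrable_density) (auto simp: power2_eq_square mult.assoc)
  have "integral\<^sup>L std_normal (\<lambda>x. x * x) = (\<integral>x. std_normal_density x * x ^ (2 * 1) \<partial>lborel)"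
    by (subst integral_density) (auto simp: power2_eq_square mult.assoc)
  also have "\<dots> = 1"
    by (subst integral_std_normal_moment_even) (simp add: fact_numeral)
  finally show "integral\<^sup>L std_normal (\<lambda>x. x * x) = 1" .
qed

context
  fixes I :: "'i set"
  assumes I: "finite I"
begin

lemma prob_space_PiM_std_normal: "prob_space (PiM I (\<lambda>_. std_normal))"
  by (intro prob_space_PiM std_normal.prob_space_axioms)

lemma integral_PiM_std_normal_prod:
  fixes f :: "'i \<Rightarrow> real \<Rightarrow> real"
  assumes "\<And>i. i \<in> I \<Longrightarrow> integrable std_normal (f i)"
  shows "integrable (PiM I (\<lambda>_. std_normal)) (\<lambda>g. \<Prod>i\<in>I. f i (g i))"
    and "(\<integral>g. (\<Prod>i\<in>I. f i (g i)) \<partial>PiM I (\<lambda>_. std_normal)) = (\<Prod>i\<in>I. integral\<^sup>L std_normal (f i))"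
proof -
  interpret product_prob_space "\<lambda>_. std_normal" I
    by unfold_locales
  show "integrable (PiM I (\<lambda>_. std_normal)) (\<lambda>g. \<Prod>i\<in>I. f i (g i))"
    using I assms by (rule product_integrable_prod)
  show "(\<integral>g. (\<Prod>i\<in>I. f i (g i)) \<partial>PiM I (\<lambda>_. std_normal)) = (\<Prod>i\<in>I. integral\<^sup>L std_normal (f i))"
    using I assms by (rule product_integral_prod)
qed

lemma PiM_std_normal_coordinate:
  assumes "a \<in> I"
  shows "integrable (PiM I (\<lambda>_. std_normal)) (\<lambda>g. g a)"
    and "(\<integral>g. g a \<partial>PiM I (\<lambda>_. std_normal)) = 0"
proof -
  define f where "f i x = (if i = a then x else 1)" for i and x :: real
  have prod: "(\<Prod>i\<in>I. f i (g i)) = g a" for g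
    unfolding f_def using I assms by (simp add: prod.delta)
  have int: "integrable std_normal (f i)" for i
    unfolding f_def using std_normal_moments(1) std_normal.integrable_const
    by (cases "i = a") auto
  have "integrable (PiM I (\<lambda>_. std_normal)) (\<lambda>g. \<Prod>i\<in>I. f i (g i))"
    by (rule integral_PiM_std_normal_prod(1)) (rule int)
  then show "integrable (PiM I (\<lambda>_. std_normal)) (\<lambda>g. g a)"
    by (simp add: prod)
  have "integral\<^sup>L std_normal (f a) = 0"
    unfolding f_def using std_normal_moments(2) by simp
  moreover have "(\<integral>g. (\<Prod>i\<in>I. f i (g i)) \<partial>PiM I (\<lambda>_. std_normal)) = (\<Prod>i\<in>I. integral\<^sup>L std_normal (f i))"
    by (rule integral_PiM_std_normal_prod(2)) (rule int)
  ultimately show "(\<integral>g. g a \<partial>PiM I (\<lambda>_. std_normal)) = 0"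
    using I assms by (auto simp: prod prod_zero_iff)
qed

lemma PiM_std_normal_coordinate_mult:
  assumes "a \<in> I" "b \<in> I"
  shows "integrable (PiM I (\<lambda>_. std_normal)) (\<lambda>g. g a * g b)"
    and "(\<integral>g. g a * g b \<partial>PiM I (\<lambda>_. std_normal)) = of_bool (a = b)"
proof -
  define f where "f i x = (if i = a then x else 1) * (if i = b then x else 1)" for i and x :: real
  have prod: "(\<Prod>i\<in>I. f i (g i)) = g a * g b" for g
    unfolding f_def prod.distrib using I assms by (simp add: prod.delta)
  have int: "integrable std_normal (f i)" for i
    unfolding f_def using std_normal_moments(1,3) std_normal.integrable_const
    by (cases "i = a"; cases "i = b") auto
  have "integrable (PiM I (\<lambda>_. std_normal)) (\<lambda>g. \<Prod>i\<in>I. f i (g i))"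
    by (rule integral_PiM_std_normal_prod(1)) (rule int)
  then show "integrable (PiM I (\<lambda>_. std_normal)) (\<lambda>g. g a * g b)"
    by (simp add: prod)
  have "(\<Prod>i\<in>I. integral\<^sup>L std_normal (f i)) = of_bool (a = b)"
  proof (cases "a = b")
    case True
    then have "integral\<^sup>L std_normal (f i) = 1" for i
      unfolding f_def using std_normal_moments(4) std_normal.prob_space
      by (cases "i = a") auto
    then show ?thesis using True by simp
  next
    case False
    then have "integral\<^sup>L std_normal (f a) = 0"
      unfolding f_def using std_normal_moments(2) by simp
    then show ?thesis using False I assms by (auto intro: prod_zero)
  qed
  moreover have "(\<integral>g. (\<Prod>i\<in>I. f i (g i)) \<partial>PiM I (\<lambda>_. std_normal)) = (\<Prod>i\<in>I. integral\<^sup>L std_normal (f i))"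
    by (rule integral_PiM_std_normal_prod(2)) (rule int)
  ultimately show "(\<integral>g. g a * g b \<partial>PiM I (\<lambda>_. std_normal)) = of_bool (a = b)"
    by (simp add: prod)
qed

lemma PiM_std_normal_linear_combination:
  fixes \<alpha> :: "'i \<Rightarrow> real"
  defines "N \<equiv> \<lambda>g. \<Sum>a\<in>I. \<alpha> a * g a"
  shows "integrable (PiM I (\<lambda>_. std_normal)) N" "integral\<^sup>L (PiM I (\<lambda>_. std_normal)) N = 0"
    and "integrable (PiM I (\<lambda>_. std_normal)) (\<lambda>g. (N g)\<^sup>2)"
    and "integral\<^sup>L (PiM I (\<lambda>_. std_normal)) (\<lambda>g. (N g)\<^sup>2) = (\<Sum>a\<in>I. (\<alpha> a)\<^sup>2)"
proof -
  have sq: "(N g)\<^sup>2 = (\<Sum>a\<in>I. \<Sum>b\<in>I. \<alpha> a * \<alpha> b * (g a * g b))" for g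
    unfolding N_def by (simp add: power2_eq_square sum_product algebra_simps)
  show "integrable (PiM I (\<lambda>_. std_normal)) N"
    unfolding N_def using PiM_std_normal_coordinate(1) by simp
  show "integral\<^sup>L (PiM I (\<lambda>_. std_normal)) N = 0"
    unfolding N_def using PiM_std_normal_coordinate by (simp add: Bochner_Integration.integral_sum)
  show "integrable (PiM I (\<lambda>_. std_normal)) (\<lambda>g. (N g)\<^sup>2)"
    unfolding sq using PiM_std_normal_coordinate_mult(1) by simp
  have "integral\<^sup>L (PiM I (\<lambda>_. std_normal)) (\<lambda>g. (N g)\<^sup>2) = (\<Sum>a\<in>I. \<Sum>b\<in>I. \<alpha> a * \<alpha> b * of_bool (a = b))"
    unfolding sq using PiM_std_normal_coordinate_mult by (simp add: Bochner_Integration.integral_sum)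
  also have "\<dots> = (\<Sum>a\<in>I. (\<alpha> a)\<^sup>2)"
    using I by (simp add: of_bool_def power2_eq_square if_distrib cong: if_cong)
  finally show "integral\<^sup>L (PiM I (\<lambda>_. std_normal)) (\<lambda>g. (N g)\<^sup>2) = (\<Sum>a\<in>I. (\<alpha> a)\<^sup>2)" .
qed

end

lemma (in pair_sigma_finite) integrable_fst_mult_snd:
  fixes f :: "'a \<Rightarrow> real" and g :: "'b \<Rightarrow> real"
  assumes f: "integrable M1 f" and g: "integrable M2 g"
  shows "integrable (M1 \<Otimes>\<^sub>M M2) (\<lambda>x. f (fst x) * g (snd x))"
proof (rule Fubini_integrable)
  have [measurable]: "f \<in> borel_measurable M1" "g \<in> borel_measurable M2"
    using f g by auto
  show "(\<lambda>x. f (fst x) * g (snd x)) \<in> borel_measurable (M1 \<Otimes>\<^sub>M M2)"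
    by measurable
  show "integrable M1 (\<lambda>x. \<integral>y. norm (f (fst (x, y)) * g (snd (x, y))) \<partial>M2)"
    using f by (simp add: abs_mult)
  show "AE x in M1. integrable M2 (\<lambda>y. f (fst (x, y)) * g (snd (x, y)))"
    using g by simp
qed

lemma (in pair_sigma_finite) integral_fst_mult_snd:
  fixes f :: "'a \<Rightarrow> real" and g :: "'b \<Rightarrow> real"
  assumes "integrable M1 f" "integrable M2 g"
  shows "(\<integral>x. f (fst x) * g (snd x) \<partial>(M1 \<Otimes>\<^sub>M M2)) = integral\<^sup>L M1 f * integral\<^sup>L M2 g"
  using integral_fst'[OF integrable_fst_mult_snd[OF assms]] by simp

lemma (in pair_prob_space) fst_plus_snd_moments:
  fixes f :: "'a \<Rightarrow> real" and g :: "'b \<Rightarrow> real"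
  assumes f: "integrable M1 f" "integrable M1 (\<lambda>x. (f x)\<^sup>2)"
    and g: "integrable M2 g" "integrable M2 (\<lambda>y. (g y)\<^sup>2)"
  defines "h \<equiv> \<lambda>x. f (fst x) + g (snd x)"
  shows "integrable (M1 \<Otimes>\<^sub>M M2) h" "integrable (M1 \<Otimes>\<^sub>M M2) (\<lambda>x. (h x)\<^sup>2)"
    and "integral\<^sup>L (M1 \<Otimes>\<^sub>M M2) h = integral\<^sup>L M1 f + integral\<^sup>L M2 g"
    and "(\<integral>x. (h x - integral\<^sup>L (M1 \<Otimes>\<^sub>M M2) h)\<^sup>2 \<partial>(M1 \<Otimes>\<^sub>M M2))
      = (\<integral>x. (f x - integral\<^sup>L M1 f)\<^sup>2 \<partial>M1) + (\<integral>y. (g y - integral\<^sup>L M2 g)\<^sup>2 \<partial>M2)"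
proof -
  note prod = integrable_fst_mult_snd integral_fst_mult_snd
  have one: "integrable M1 (\<lambda>_. 1::real)" "integrable M2 (\<lambda>_. 1::real)" by simp_all
  have h: "h x = f (fst x) * 1 + 1 * g (snd x)" for x
    by (simp add: h_def)
  show "integrable (M1 \<Otimes>\<^sub>M M2) h"
    unfolding h using prod(1)[OF f(1) one(2)] prod(1)[OF one(1) g(1)] by simp
  show mean: "integral\<^sup>L (M1 \<Otimes>\<^sub>M M2) h = integral\<^sup>L M1 f + integral\<^sup>L M2 g"
    unfolding h using prod[OF f(1) one(2)] prod[OF one(1) g(1)]
    by (simp add: M1.prob_space M2.prob_space)
  have h2: "(h x)\<^sup>2 = (f (fst x))\<^sup>2 * 1 + (2 * f (fst x)) * g (snd x) + 1 * (g (snd x))\<^sup>2" for x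
    by (simp add: h_def power2_eq_square algebra_simps)
  show "integrable (M1 \<Otimes>\<^sub>M M2) (\<lambda>x. (h x)\<^sup>2)"
    unfolding h2 using prod(1)[OF f(2) one(2)] prod(1)[OF _ g(1), of "\<lambda>x. 2 * f x"]
      prod(1)[OF one(1) g(2)] f(1) by simp
  define f' where "f' = (\<lambda>x. f x - integral\<^sup>L M1 f)"
  define g' where "g' = (\<lambda>y. g y - integral\<^sup>L M2 g)"
  have f': "integrable M1 f'" "integrable M1 (\<lambda>x. (f' x)\<^sup>2)" "integral\<^sup>L M1 f' = 0"
    using f by (auto simp: f'_def power2_diff M1.prob_space)
  have g': "integrable M2 g'" "integrable M2 (\<lambda>y. (g' y)\<^sup>2)" "integral\<^sup>L M2 g' = 0"
    using g by (auto simp: g'_def power2_diff M2.prob_space)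
  have c: "(h x - integral\<^sup>L (M1 \<Otimes>\<^sub>M M2) h)\<^sup>2
      = (f' (fst x))\<^sup>2 * 1 + (2 * f' (fst x)) * g' (snd x) + 1 * (g' (snd x))\<^sup>2" for x
    unfolding mean by (simp add: h_def f'_def g'_def power2_eq_square algebra_simps)
  have f2: "integrable M1 (\<lambda>x. 2 * f' x)" using f'(1) by simp
  note i1 = prod(1)[OF f'(2) one(2)] and i2 = prod(1)[OF f2 g'(1)] and i3 = prod(1)[OF one(1) g'(2)]
  have "(\<integral>x. (h x - integral\<^sup>L (M1 \<Otimes>\<^sub>M M2) h)\<^sup>2 \<partial>(M1 \<Otimes>\<^sub>M M2))
      = (\<integral>x. (f' x)\<^sup>2 \<partial>M1) * (\<integral>_. 1 \<partial>M2) + (\<integral>x. 2 * f' x \<partial>M1) * integral\<^sup>L M2 g'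
        + (\<integral>_. 1 \<partial>M1) * (\<integral>y. (g' y)\<^sup>2 \<partial>M2)"
    unfolding c by (simp only: Bochner_Integration.integral_add Bochner_Integration.integrable_add
        i1 i2 i3 prod(2)[OF f'(2) one(2)] prod(2)[OF f2 g'(1)] prod(2)[OF one(1) g'(2)])
  also have "\<dots> = (\<integral>x. (f x - integral\<^sup>L M1 f)\<^sup>2 \<partial>M1) + (\<integral>y. (g y - integral\<^sup>L M2 g)\<^sup>2 \<partial>M2)"
    using g'(3) by (simp add: M1.prob_space M2.prob_space f'_def g'_def)
  finally show "(\<integral>x. (h x - integral\<^sup>L (M1 \<Otimes>\<^sub>M M2) h)\<^sup>2 \<partial>(M1 \<Otimes>\<^sub>M M2))
      = (\<integral>x. (f x - integral\<^sup>L M1 f)\<^sup>2 \<partial>M1) + (\<integral>y. (g y - integral\<^sup>L M2 g)\<^sup>2 \<partial>M2)" .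
qed

section \<open>The polynomial interpolation estimator\<close>

locale staggered_schedule =
  fixes n beta :: nat and k :: "nat \<Rightarrow> nat"
  assumes beta_pos: "1 \<le> beta" and k_0: "k 0 = 0"
    and k_step: "\<forall>t<beta. k t < k (Suc t)" and k_beta: "k beta \<le> n"
begin

lemma k_add_le: "s + d \<le> beta \<Longrightarrow> k s + d \<le> k (s + d)"
proof (induction d)
  case (Suc d)
  then have "k s + d \<le> k (s + d)" "k (s + d) < k (Suc (s + d))"
    using k_step by auto
  then show ?case by simp
qed simp

lemma k_mono: "s \<le> t \<Longrightarrow> t \<le> beta \<Longrightarrow> k s \<le> k t"
  using k_add_le[of s "t - s"] by simp

lemma k_strict_mono: "s < t \<Longrightarrow> t \<le> beta \<Longrightarrow> k s < k t"
  using k_add_le[of s "t - s"] by simp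

lemma k_le_n: "t \<le> beta \<Longrightarrow> k t \<le> n"
  using k_mono[of t beta] k_beta by simp

lemma n_pos: "0 < n"
  using k_strict_mono[of 0 beta] beta_pos k_beta by simp

lemma min_gap_le:
  assumes "s \<noteq> t" "s \<le> beta" "t \<le> beta"
  shows "real (min_gap k beta) \<le> \<bar>real (k t) - real (k s)\<bar>"
proof -
  have gap: "min_gap k beta \<le> k v - k u" if "u < v" "v \<le> beta" for u v
  proof -
    have "min_gap k beta \<le> k v - k (v - 1)"
      unfolding min_gap_def using that by (intro Min_le) auto
    also have "\<dots> \<le> k v - k u"
      using that k_mono[of u "v - 1"] by (intro diff_le_mono2) auto
    finally show ?thesis .
  qed
  consider "s < t" | "t < s" using assms(1) by linarith
  then show ?thesis
  proof cases
    case 1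
    then show ?thesis using gap[OF 1 assms(3)] k_mono[of s t] assms by (simp add: of_nat_diff)
  next
    case 2
    then show ?thesis using gap[OF 2 assms(2)] k_mono[of t s] assms by (simp add: of_nat_diff)
  qed
qed

lemma min_gap_pos: "0 < min_gap k beta"
proof -
  have "min_gap k beta \<in> (\<lambda>t. k t - k (t - 1)) ` {1..beta}"
    unfolding min_gap_def using beta_pos by (intro Min_in) auto
  then obtain t where "t \<in> {1..beta}" "min_gap k beta = k t - k (t - 1)"
    by auto
  then show ?thesis using k_strict_mono[of "t - 1" t] by simp
qed

abbreviation node :: "nat \<Rightarrow> real" where
  "node \<equiv> \<lambda>t. real (k t) / real n"

definition weight :: "nat \<Rightarrow> real" where
  "weight t = lagrange_basis node beta t 1 - lagrange_basis node beta t 0"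

lemma node_sep:
  assumes "s \<noteq> t" "s \<le> beta" "t \<le> beta"
  shows "real (min_gap k beta) / n \<le> \<bar>node t - node s\<bar>"
  using min_gap_le[OF assms] n_pos by (simp add: divide_right_mono flip: diff_divide_distrib)

lemma inj_on_node: "inj_on node {0..beta}"
proof (rule inj_onI, rule ccontr)
  fix s t assume "s \<in> {0..beta}" "t \<in> {0..beta}" "node s = node t" "s \<noteq> t"
  then have "real (min_gap k beta) / n \<le> \<bar>node t - node s\<bar>"
    using node_sep[of s t] by simp
  also have "\<dots> = 0"
    by (simp only: \<open>node s = node t\<close> diff_self abs_zero)
  finally have "real (min_gap k beta) / n \<le> 0" .
  then show False
    using min_gap_pos n_pos by (simp add: divide_le_0_iff)
qed

lemma weight_sq_le:
  assumes "t \<le> beta"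
  shows "(weight t)\<^sup>2 \<le> 4 * (real n / min_gap k beta) ^ (2 * beta)"
proof -
  define q where "q = (real n / min_gap k beta) ^ beta"
  have "\<bar>lagrange_basis node beta t y\<bar> \<le> q" if "0 \<le> y" "y \<le> 1" for y
  proof -
    have near: "\<bar>y - node s\<bar> \<le> 1" if "s \<le> beta" for s
    proof -
      have "0 \<le> node s" "node s \<le> 1"
        using k_le_n[OF that] n_pos by (simp_all add: divide_le_eq_1)
      then show ?thesis
        using \<open>0 \<le> y\<close> \<open>y \<le> 1\<close> by (simp only: abs_le_iff) linarith
    qed
    have "\<bar>lagrange_basis node beta t y\<bar> \<le> (1 / (real (min_gap k beta) / n)) ^ beta"
      using min_gap_pos n_pos assms by (intro abs_lagrange_basis_le[OF assms] node_sep near) auto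
    then show ?thesis by (simp add: q_def)
  qed
  then have "\<bar>weight t\<bar> \<le> q + q"
    unfolding weight_def by (intro order.trans[OF abs_triangle_ineq4] add_mono) auto
  then have "\<bar>weight t\<bar> \<le> 2 * q"
    by simp
  then have "(weight t)\<^sup>2 \<le> (2 * q)\<^sup>2"
    by (metis abs_ge_zero power2_abs power_mono)
  then show ?thesis
    by (simp add: q_def power_mult_distrib power_mult mult.commute)
qed

text \<open>Interpolation at the nodes reproduces \<open>incl_prob\<close>, a polynomial in \<open>K / n\<close> of degree
  \<open>r \<le> beta\<close>; so the weights extract its increment from 0 to 1.\<close>
lemma sum_weight_incl_prob:
  assumes "r \<le> beta" "r \<le> n"
  shows "(\<Sum>t\<in>{0..beta}. weight t * incl_prob n (k t) r) = of_bool (r \<noteq> 0)"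
proof -
  let ?p = "incl_prob_poly n r"
  have deg: "degree ?p \<le> beta"
    using degree_incl_prob_poly assms(1) le_trans by blast
  have "(\<Sum>t\<in>{0..beta}. weight t * incl_prob n (k t) r)
      = (\<Sum>t\<in>{0..beta}. poly ?p (node t) * lagrange_basis node beta t 1)
        - (\<Sum>t\<in>{0..beta}. poly ?p (node t) * lagrange_basis node beta t 0)"
    using n_pos by (simp add: weight_def poly_incl_prob_poly sum_subtractf algebra_simps)
  also have "\<dots> = poly ?p 1 - poly ?p 0"
    by (simp add: lagrange_interpolation[OF inj_on_node deg])
  finally show ?thesis
    using assms by (simp add: poly_incl_prob_poly_0 poly_incl_prob_poly_1)
qed

lemma rollout_stage: "t \<le> beta \<Longrightarrow> map_pmf (\<lambda>Z. Z t) (rollout n k beta) = uniform_subset {..<n} (k t)"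
  using k_0 k_beta k_step by (intro rollout_stage_distribution) auto

lemma rollout_stage_subset:
  assumes "Z \<in> set_pmf (rollout n k beta)" "t \<le> beta"
  shows "Z t \<subseteq> {..<n}"
proof -
  have "Z t \<in> set_pmf (map_pmf (\<lambda>Z. Z t) (rollout n k beta))"
    using assms(1) by simp
  then show ?thesis
    using assms(2) k_le_n by (simp add: rollout_stage set_pmf_uniform_subset)
qed

lemma finite_rollout: "finite (set_pmf (rollout n k beta))"
  using k_0 k_beta k_step k_le_n by (intro finite_set_pmf_rollout) auto

end

locale interference_experiment = staggered_schedule +
  fixes E :: "(nat \<times> nat) set" and c :: "nat \<Rightarrow> nat set \<Rightarrow> real" and Y :: "nat \<Rightarrow> nat set \<Rightarrow> real"
  assumes E_subset: "E \<subseteq> {..<n} \<times> {..<n}"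
    and potential_outcomes: "\<forall>i<n. \<forall>Z\<subseteq>{..<n}.
      Y i Z = (\<Sum>S\<in>small_subsets E beta i. c i S * (\<Prod>j\<in>S. of_bool (j \<in> Z)))"
begin

definition treatment_part :: "(nat \<Rightarrow> nat set) \<Rightarrow> real" where
  "treatment_part Z = (\<Sum>t\<in>{0..beta}. weight t * ((1 / real n) * (\<Sum>i<n. Y i (Z t))))"

definition noise_weight :: "nat \<times> nat \<Rightarrow> real" where
  "noise_weight a = weight (snd a) / real n"

lemma TTE_PI_eq:
  "TTE_PI n k beta \<sigma> Y \<omega>
    = treatment_part (fst \<omega>) + (\<Sum>a\<in>{..<n} \<times> {..beta}. \<sigma> * noise_weight a * snd \<omega> a)"
proof -
  have "(\<Sum>a\<in>{..<n} \<times> {..beta}. \<sigma> * noise_weight a * snd \<omega> a)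
      = (\<Sum>t\<in>{0..beta}. \<Sum>i<n. weight t * (\<sigma> * snd \<omega> (i, t)) / real n)"
    by (subst sum.swap) (simp add: sum.cartesian_product noise_weight_def atLeast0AtMost mult_ac
        case_prod_unfold)
  then show ?thesis
    unfolding TTE_PI_def treatment_part_def Let_def weight_def[symmetric]
    by (simp add: sum.distrib sum_distrib_left sum_divide_distrib algebra_simps)
qed

lemma treatment_part_on_support:
  "Z \<in> set_pmf (rollout n k beta)
    \<Longrightarrow> treatment_part Z = (\<Sum>t\<in>{0..beta}. weight t * mean_outcome n E beta c (Z t))"
  unfolding treatment_part_def
  using mean_potential_outcome[OF E_subset potential_outcomes] rollout_stage_subset by simp

lemma integrable_rollout: "integrable (measure_pmf (rollout n k beta)) (f :: _ \<Rightarrow> real)"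
  by (rule integrable_measure_pmf_finite[OF finite_rollout])

lemma expectation_mean_outcome_stage:
  assumes "t \<le> beta"
  shows "measure_pmf.expectation (rollout n k beta) (\<lambda>Z. mean_outcome n E beta c (Z t))
    = (1 / real n) * (\<Sum>(i, S)\<in>monomials n E beta. c i S * incl_prob n (k t) (card S))"
proof -
  have "measure_pmf.expectation (rollout n k beta) (\<lambda>Z. mean_outcome n E beta c (Z t))
      = measure_pmf.expectation (map_pmf (\<lambda>Z. Z t) (rollout n k beta)) (mean_outcome n E beta c)"
    by simp
  then show ?thesis
    using expectation_mean_outcome[OF E_subset k_le_n[OF assms]] by (simp add: rollout_stage[OF assms])
qed

lemma expectation_treatment_part:
  "measure_pmf.expectation (rollout n k beta) treatment_part = TTE n Y"
proof -
  let ?R = "rollout n k beta"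
  have "measure_pmf.expectation ?R treatment_part
      = measure_pmf.expectation ?R (\<lambda>Z. \<Sum>t\<in>{0..beta}. weight t * mean_outcome n E beta c (Z t))"
    by (intro integral_cong_AE) (auto simp: AE_measure_pmf_iff treatment_part_on_support)
  also have "\<dots> = (\<Sum>t\<in>{0..beta}. weight t *
      ((1 / real n) * (\<Sum>(i, S)\<in>monomials n E beta. c i S * incl_prob n (k t) (card S))))"
    by (simp add: Bochner_Integration.integral_sum integrable_rollout expectation_mean_outcome_stage)
  also have "\<dots> = (1 / real n) *
      (\<Sum>(i, S)\<in>monomials n E beta. c i S * (\<Sum>t\<in>{0..beta}. weight t * incl_prob n (k t) (card S)))"
    by (simp add: sum_distrib_left case_prod_unfold algebra_simps sum.swap[of _ "{0..beta}"])
  also have "\<dots> = (1 / real n) * (\<Sum>(i, S)\<in>monomials n E beta. c i S * of_bool (S \<noteq> {}))"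
  proof (intro arg_cong[where f = "(*) _"] sum.cong refl)
    fix p assume "p \<in> monomials n E beta"
    moreover obtain i S where "p = (i, S)" by fastforce
    ultimately have "S \<subseteq> {..<n}" "card S \<le> beta"
      using monomialsD[OF E_subset] by auto
    moreover from this have "card S \<le> n" "finite S"
      using card_mono[of "{..<n}" S] finite_subset by auto
    ultimately show "(case p of (i, S) \<Rightarrow> c i S * (\<Sum>t\<in>{0..beta}. weight t * incl_prob n (k t) (card S)))
        = (case p of (i, S) \<Rightarrow> c i S * of_bool (S \<noteq> {}))"
      by (simp add: \<open>p = (i, S)\<close> sum_weight_incl_prob)
  qed
  also have "\<dots> = TTE n Y"
    using TTE_eq_sum_coeffs[OF E_subset potential_outcomes] by simp
  finally show ?thesis .
qed

lemma treatment_part_AE: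
  "AE Z in rollout n k beta. treatment_part Z = (\<Sum>t\<in>{0..beta}. weight t * mean_outcome n E beta c (Z t))"
  by (simp add: AE_measure_pmf_iff treatment_part_on_support)

lemma variance_weighted_mean_outcome_stage:
  assumes "t \<le> beta"
  shows "measure_pmf.variance (rollout n k beta) (\<lambda>Z. weight t * mean_outcome n E beta c (Z t))
    \<le> 4 * (real n / min_gap k beta) ^ (2 * beta) * (Y_max n E beta c ^ 2 * max_degree n E ^ 2 / n
        + 2 * real beta ^ 2 * Y_max n E beta c ^ 2 / k 1)"
proof -
  let ?mo = "mean_outcome n E beta c"
  have "measure_pmf.variance (rollout n k beta) (\<lambda>Z. ?mo (Z t))
      = measure_pmf.variance (map_pmf (\<lambda>Z. Z t) (rollout n k beta)) ?mo"
    by simp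
  also have "\<dots> \<le> Y_max n E beta c ^ 2 * max_degree n E ^ 2 / n + 2 * real beta ^ 2 * Y_max n E beta c ^ 2 / k t"
    unfolding rollout_stage[OF assms]
    by (rule variance_mean_outcome[OF E_subset n_pos beta_pos k_le_n[OF assms]])
  also have "2 * real beta ^ 2 * Y_max n E beta c ^ 2 / k t \<le> 2 * real beta ^ 2 * Y_max n E beta c ^ 2 / k 1"
    \<comment> \<open>at \<open>t = 0\<close> the left side is a division by \<open>k 0 = 0\<close>, hence 0\<close>
  proof (cases "t = 0")
    case False
    then show ?thesis
      using assms k_mono[of 1 t] k_strict_mono[of 0 1] k_0 beta_pos by (intro divide_left_mono) auto
  qed (simp add: k_0)
  finally have "measure_pmf.variance (rollout n k beta) (\<lambda>Z. ?mo (Z t))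
      \<le> Y_max n E beta c ^ 2 * max_degree n E ^ 2 / n + 2 * real beta ^ 2 * Y_max n E beta c ^ 2 / k 1"
    by simp
  then show ?thesis
    unfolding measure_pmf.variance_scale
    using weight_sq_le[OF assms] by (intro mult_mono) (auto simp: measure_pmf.variance_positive)
qed

lemma variance_treatment_part:
  "measure_pmf.variance (rollout n k beta) treatment_part
    \<le> (real beta + 1) ^ 2 * (4 * (real n / min_gap k beta) ^ (2 * beta) * (Y_max n E beta c ^ 2
        * max_degree n E ^ 2 / n + 2 * real beta ^ 2 * Y_max n E beta c ^ 2 / k 1))"
proof -
  let ?R = "rollout n k beta" and ?T = "\<lambda>Z. \<Sum>t\<in>{0..beta}. weight t * mean_outcome n E beta c (Z t)"
  have "measure_pmf.expectation ?R treatment_part = measure_pmf.expectation ?R ?T"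
    using treatment_part_AE by (intro integral_cong_AE) auto
  then have "measure_pmf.variance ?R treatment_part = measure_pmf.variance ?R ?T"
    using treatment_part_AE by (intro integral_cong_AE) auto
  also have "\<dots> \<le> card {0..beta} * (\<Sum>t\<in>{0..beta}.
      measure_pmf.variance ?R (\<lambda>Z. weight t * mean_outcome n E beta c (Z t)))"
    by (rule measure_pmf.variance_sum_le) (simp_all add: integrable_rollout)
  also have "\<dots> \<le> card {0..beta} * (\<Sum>t\<in>{0..beta}. 4 * (real n / min_gap k beta) ^ (2 * beta)
      * (Y_max n E beta c ^ 2 * max_degree n E ^ 2 / n + 2 * real beta ^ 2 * Y_max n E beta c ^ 2 / k 1))"
    by (intro mult_left_mono sum_mono variance_weighted_mean_outcome_stage) auto
  also have "\<dots> = (real beta + 1) ^ 2 * (4 * (real n / min_gap k beta) ^ (2 * beta) * (Y_max n E beta c ^ 2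
        * max_degree n E ^ 2 / n + 2 * real beta ^ 2 * Y_max n E beta c ^ 2 / k 1))"
    by (simp add: power2_eq_square add.commute)
  finally show ?thesis .
qed

lemma sum_noise_weight_sq_le:
  "(\<Sum>a\<in>{..<n} \<times> {..beta}. (\<sigma> * noise_weight a)\<^sup>2)
    \<le> 4 * (real beta + 1) * (real n / min_gap k beta) ^ (2 * beta) * \<sigma>\<^sup>2 / n"
proof -
  have "(\<Sum>a\<in>{..<n} \<times> {..beta}. (\<sigma> * noise_weight a)\<^sup>2)
      = n * (\<Sum>t\<le>beta. (weight t)\<^sup>2 * (\<sigma>\<^sup>2 / n\<^sup>2))"
    by (simp add: sum.cartesian_product' noise_weight_def power_mult_distrib power_divide mult_ac)
  also have "\<dots> \<le> n * (\<Sum>t\<le>beta. 4 * (real n / min_gap k beta) ^ (2 * beta) * (\<sigma>\<^sup>2 / n\<^sup>2))"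
    using weight_sq_le by (intro mult_left_mono sum_mono mult_right_mono) auto
  also have "\<dots> = 4 * (real beta + 1) * (real n / min_gap k beta) ^ (2 * beta) * \<sigma>\<^sup>2 / n"
    using n_pos min_gap_pos by (simp add: power2_eq_square field_simps)
  finally show ?thesis .
qed

lemma TTE_PI_moments:
  fixes \<sigma> :: real
  defines "M \<equiv> design_measure n k beta" and "est \<equiv> TTE_PI n k beta \<sigma> Y"
  shows "integrable M est" "integrable M (\<lambda>\<omega>. (est \<omega>)\<^sup>2)" "integral\<^sup>L M est = TTE n Y"
    and "(\<integral>\<omega>. (est \<omega> - integral\<^sup>L M est)\<^sup>2 \<partial>M)
      = measure_pmf.variance (rollout n k beta) treatment_part
        + (\<Sum>a\<in>{..<n} \<times> {..beta}. (\<sigma> * noise_weight a)\<^sup>2)"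
proof -
  define I where "I = {..<n} \<times> {..beta}"
  define N where "N g = (\<Sum>a\<in>I. \<sigma> * noise_weight a * g a)" for g :: "nat \<times> nat \<Rightarrow> real"
  have I: "finite I" by (simp add: I_def)
  interpret pmf_noise: pair_prob_space "measure_pmf (rollout n k beta)" "PiM I (\<lambda>_. std_normal)"
    using prob_space_PiM_std_normal[OF I]
    by (simp add: pair_prob_space_def pair_sigma_finite_def prob_space_imp_sigma_finite
        prob_space_measure_pmf)
  have M: "M = measure_pmf (rollout n k beta) \<Otimes>\<^sub>M PiM I (\<lambda>_. std_normal)"
    by (simp add: M_def design_measure_def I_def)
  have est: "est = (\<lambda>\<omega>. treatment_part (fst \<omega>) + N (snd \<omega>))"
    unfolding est_def by (rule ext) (simp add: TTE_PI_eq N_def I_def)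
  note N = PiM_std_normal_linear_combination[OF I, of "\<lambda>a. \<sigma> * noise_weight a", folded N_def]
  note moments = pmf_noise.fst_plus_snd_moments[where f = treatment_part and g = N,
      OF integrable_rollout integrable_rollout N(1,3), folded M]
  show "integrable M est" "integrable M (\<lambda>\<omega>. (est \<omega>)\<^sup>2)"
    unfolding est using moments(1,2) .
  show "integral\<^sup>L M est = TTE n Y"
    unfolding est using moments(3) N(2) by (simp add: expectation_treatment_part)
  show "(\<integral>\<omega>. (est \<omega> - integral\<^sup>L M est)\<^sup>2 \<partial>M)
      = measure_pmf.variance (rollout n k beta) treatment_part
        + (\<Sum>a\<in>{..<n} \<times> {..beta}. (\<sigma> * noise_weight a)\<^sup>2)"
    unfolding est using moments(4) N(2,4) by (simp add: I_def power_mult_distrib)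
qed

lemma TTE_PI_variance_le:
  fixes \<sigma> :: real
  defines "M \<equiv> design_measure n k beta" and "est \<equiv> TTE_PI n k beta \<sigma> Y"
    and "r \<equiv> (real n / real (min_gap k beta)) ^ (2 * beta)"
  shows "(\<integral>\<omega>. (est \<omega> - integral\<^sup>L M est)\<^sup>2 \<partial>M)
    \<le> 32 * (real beta ^ 2 * Y_max n E beta c ^ 2 * (real (max_degree n E) ^ 2 / real n
        + real beta ^ 2 / real (k 1)) * r + \<sigma> ^ 2 * real beta / real n * r)"
proof -
  define b where "b = real beta"
  define A where "A = Y_max n E beta c ^ 2 * real (max_degree n E) ^ 2 / real n"
  define B where "B = Y_max n E beta c ^ 2 * b ^ 2 / real (k 1)"
  have b: "1 \<le> b" and "0 \<le> r" "0 \<le> A" "0 \<le> B"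
    using beta_pos by (simp_all add: b_def r_def A_def B_def)
  have "(b + 1)\<^sup>2 * (4 * r * (A + 2 * B)) \<le> (2 * b)\<^sup>2 * (4 * r * (2 * (A + B)))"
    using b \<open>0 \<le> r\<close> \<open>0 \<le> A\<close> \<open>0 \<le> B\<close> by (intro mult_mono mult_left_mono power_mono) auto
  moreover have "4 * (b + 1) * (r * \<sigma>\<^sup>2 / n) \<le> 32 * b * (r * \<sigma>\<^sup>2 / n)"
    using b \<open>0 \<le> r\<close> by (intro mult_right_mono) auto
  moreover have "(\<integral>\<omega>. (est \<omega> - integral\<^sup>L M est)\<^sup>2 \<partial>M)
      \<le> (b + 1)\<^sup>2 * (4 * r * (A + 2 * B)) + 4 * (b + 1) * (r * \<sigma>\<^sup>2 / n)"
    using variance_treatment_part sum_noise_weight_sq_le[of \<sigma>]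
    unfolding M_def est_def TTE_PI_moments(4)
    by (simp add: r_def b_def A_def B_def mult_ac)
  ultimately have "(\<integral>\<omega>. (est \<omega> - integral\<^sup>L M est)\<^sup>2 \<partial>M)
      \<le> (2 * b)\<^sup>2 * (4 * r * (2 * (A + B))) + 32 * b * (r * \<sigma>\<^sup>2 / n)"
    by linarith
  also have "\<dots> = 32 * (real beta ^ 2 * Y_max n E beta c ^ 2 * (real (max_degree n E) ^ 2 / real n
      + real beta ^ 2 / real (k 1)) * r + \<sigma> ^ 2 * real beta / real n * r)"
    by (simp add: b_def A_def B_def power2_eq_square algebra_simps)
  finally show ?thesis .
qed

lemma TTE_PI_bounds:
  "let M = design_measure n k beta; est = TTE_PI n k beta \<sigma> Y;
       d = real (max_degree n E); Ym = Y_max n E beta c;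
       r = (real n / real (min_gap k beta)) ^ (2 * beta) in
    integrable M est \<and> integrable M (\<lambda>\<omega>. (est \<omega>)\<^sup>2) \<and>
    (\<integral>\<omega>. est \<omega> \<partial>M) = TTE n Y \<and>
    (\<integral>\<omega>. (est \<omega> - (\<integral>\<omega>'. est \<omega>' \<partial>M))\<^sup>2 \<partial>M)
      \<le> 32 * (real beta ^ 2 * Ym ^ 2 * (d ^ 2 / real n + real beta ^ 2 / real (k 1)) * r
             + \<sigma> ^ 2 * real beta / real n * r)"
  unfolding Let_def using TTE_PI_moments(1-3) TTE_PI_variance_le by blast

end

theorem theorem2:
  "\<exists>C::real. \<forall>(n::nat) (E::(nat \<times> nat) set) (beta::nat) (c::nat \<Rightarrow> nat set \<Rightarrow> real)
      (Y::nat \<Rightarrow> nat set \<Rightarrow> real) (k::nat \<Rightarrow> nat) (\<sigma>::real).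
     E \<subseteq> {..<n} \<times> {..<n} \<longrightarrow>
     (\<forall>i<n. \<forall>Z\<subseteq>{..<n}. Y i Z = (\<Sum>S\<in>small_subsets E beta i. c i S * (\<Prod>j\<in>S. of_bool (j \<in> Z)))) \<longrightarrow>
     1 \<le> beta \<longrightarrow> k 0 = 0 \<longrightarrow> (\<forall>t<beta. k t < k (Suc t)) \<longrightarrow> k beta \<le> n \<longrightarrow>
     0 \<le> \<sigma> \<longrightarrow>
     (let M = design_measure n k beta; est = TTE_PI n k beta \<sigma> Y;
          d = real (max_degree n E); Ym = Y_max n E beta c;
          r = (real n / real (min_gap k beta)) ^ (2 * beta) in
       integrable M est \<and> integrable M (\<lambda>\<omega>. (est \<omega>)\<^sup>2) \<and>
       (\<integral>\<omega>. est \<omega> \<partial>M) = TTE n Y \<and>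
       (\<integral>\<omega>. (est \<omega> - (\<integral>\<omega>'. est \<omega>' \<partial>M))\<^sup>2 \<partial>M)
         \<le> C * (real beta ^ 2 * Ym ^ 2 * (d ^ 2 / real n + real beta ^ 2 / real (k 1)) * r
                + \<sigma> ^ 2 * real beta / real n * r))"
  by (intro exI[of _ 32] allI impI interference_experiment.TTE_PI_bounds)
     (simp add: interference_experiment_def interference_experiment_axioms_def staggered_schedule_def)

end
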